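(* Up to scaling, isometries of $\mathbf R^{1,1}$ and translations, there are exactly three space-like curves that translate under the mean curvature flow: \begin{itemize} \item $\cosh x = e^{y-t}$, with curvature $k=\frac{1}{\cos s}$, $-\frac\pi2<s<\frac\pi2$, translating along the $y$-axis; \item $\sinh y = e^{t-x}$, with $k = \frac{1}{\sinh s}$, $s>0$, translating along the $x$-axis; \item $\xi = e^{\eta}+t$, with $k=\frac1s$, $s>0$, translating along the $\xi$-axis. \end{itemize}
   Context: $\mathbf R^{1,1}$ is $\mathbf R^2$ with $\langle (x_1,y_1),(x_2,y_2)\rangle = x_1x_2-y_1y_2$; points $x+hy$, $h^2=1$. Light-like coordinates: $\xi=x+y$, $\eta=x-y$; the $\xi$-axis is the line $y=x$. For a space-like curve ($\langle X_u,X_u\rangle>0$), $s$ is Minkowski arc-length, $T=X_s$, $N=hT$, $T_s=kN$. A family $X(\cdot,t)$ moves by mean curvature flow if $\langle\partial_tX,N\rangle=-k$; a curve translates with velocity $C$ if $X+Ct$ is such a flow, equivalently $-\langle C,N\rangle=k$. *)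

theory Defs
  imports "HOL-Analysis.Analysis"
begin

text \<open>The Minkowski plane R^{1,1} is modelled as real \<times> real, a point (x,y)
  standing for x + h y.\<close>

definition mink :: "real \<times> real \<Rightarrow> real \<times> real \<Rightarrow> real" where
  "mink p q = fst p * fst q - snd p * snd q"

text \<open>Multiplication by h (h^2 = 1): h (x + h y) = y + h x.\<close>
definition hmul :: "real \<times> real \<Rightarrow> real \<times> real" where
  "hmul p = (snd p, fst p)"

definition spacelike_curve :: "real set \<Rightarrow> (real \<Rightarrow> real \<times> real) \<Rightarrow> bool" where
  "spacelike_curve I X \<longleftrightarrow> is_interval I \<and> open I \<and> I \<noteq> {} \<and>
     (\<exists>X' X''. (\<forall>u\<in>I. (X has_vector_derivative X' u) (at u)
                     \<and> (X' has_vector_derivative X'' u) (at u)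
                     \<and> mink (X' u) (X' u) > 0)
              \<and> continuous_on I X'')"

definition speed :: "(real \<Rightarrow> real \<times> real) \<Rightarrow> real \<Rightarrow> real" where
  "speed X u = sqrt (mink (vector_derivative X (at u)) (vector_derivative X (at u)))"

definition utan :: "(real \<Rightarrow> real \<times> real) \<Rightarrow> real \<Rightarrow> real \<times> real" where
  "utan X u = (1 / speed X u) *\<^sub>R vector_derivative X (at u)"

definition unor :: "(real \<Rightarrow> real \<times> real) \<Rightarrow> real \<Rightarrow> real \<times> real" where
  "unor X u = hmul (utan X u)"

text \<open>Curvature k: T_s = k N, i.e. dT/du = (ds/du) k N.\<close>
definition curv :: "(real \<Rightarrow> real \<times> real) \<Rightarrow> real \<Rightarrow> real" where
  "curv X u = (THE k. vector_derivative (utan X) (at u) = (speed X u * k) *\<^sub>R unor X u)"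

text \<open>X translates with velocity C under mean curvature flow: - <C,N> = k.\<close>
definition translates_with :: "real set \<Rightarrow> (real \<Rightarrow> real \<times> real) \<Rightarrow> real \<times> real \<Rightarrow> bool" where
  "translates_with I X C \<longleftrightarrow> (\<forall>u\<in>I. - mink C (unor X u) = curv X u)"

definition translator :: "real set \<Rightarrow> (real \<Rightarrow> real \<times> real) \<Rightarrow> bool" where
  "translator I X \<longleftrightarrow> spacelike_curve I X \<and> (\<exists>C. translates_with I X C)"

definition mink_isometry :: "(real \<times> real \<Rightarrow> real \<times> real) \<Rightarrow> bool" where
  "mink_isometry L \<longleftrightarrow> linear L \<and> (\<forall>p q. mink (L p) (L q) = mink p q)"

definition similarity :: "(real \<times> real \<Rightarrow> real \<times> real) \<Rightarrow> bool" where
  "similarity F \<longleftrightarrow> (\<exists>c L b. c > 0 \<and> mink_isometry L \<and> F = (\<lambda>p. c *\<^sub>R L p + b))"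

text \<open>The three model curves (at time t = 0) and their arc-length parametrisations.\<close>
definition Gamma1 :: "(real \<times> real) set" where
  "Gamma1 = {(x, y). cosh x = exp y}"
definition Gamma2 :: "(real \<times> real) set" where
  "Gamma2 = {(x, y). sinh y = exp (- x)}"
definition Gamma3 :: "(real \<times> real) set" where
  "Gamma3 = {(x, y). x + y = exp (x - y)}"

definition gamma1 :: "real \<Rightarrow> real \<times> real" where
  "gamma1 s = (ln ((1 + sin s) / cos s), - ln (cos s))"
definition gamma2 :: "real \<Rightarrow> real \<times> real" where
  "gamma2 s = (ln (sinh s), arsinh (1 / sinh s))"
definition gamma3 :: "real \<Rightarrow> real \<times> real" where
  "gamma3 s = ((s\<^sup>2 / 4 + 2 * ln (s / 2)) / 2, (s\<^sup>2 / 4 - 2 * ln (s / 2)) / 2)"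

end

(*
  Along a space-like curve with unit tangent T and normal N = hT, the Frenet equations
  X' = v T, T' = v k N together with the translating condition k = -<C,N> form an autonomous
  system.  A boost, a reflection and a scaling bring C to (0,1), (1,0) or (1/2,1/2) according
  to whether C is time-, space- or light-like; after orienting T so that its x-component is
  positive, the normalised system has two explicit first integrals in each case, and they put
  the curve on Gamma1, Gamma2 or Gamma3 respectively.
  The three curves are inequivalent because a similarity acts on the null coordinates
  xi = x + y, eta = x - y by affine maps, possibly exchanging them, while the curves have
  incompatible shapes in these coordinates: on Gamma1 both coordinates are bounded on one side,
  on Gamma2 and Gamma3 the coordinate eta takes all real values while xi grows like
  log (2 + e^eta), respectively e^eta.
*)
theory Submission
  imports Defs
begin

lemma has_real_derivative_fst:
  "(g has_vector_derivative g') F \<Longrightarrow> ((\<lambda>x. fst (g x)) has_real_derivative fst g') F"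
  using bounded_linear.has_vector_derivative[OF bounded_linear_fst]
  by (simp add: has_real_derivative_iff_has_vector_derivative)

lemma has_real_derivative_snd:
  "(g has_vector_derivative g') F \<Longrightarrow> ((\<lambda>x. snd (g x)) has_real_derivative snd g') F"
  using bounded_linear.has_vector_derivative[OF bounded_linear_snd]
  by (simp add: has_real_derivative_iff_has_vector_derivative)

lemma has_vector_derivative_real_Pair:
  "(f has_real_derivative a) (at x) \<Longrightarrow> (g has_real_derivative b) (at x) \<Longrightarrow>
   ((\<lambda>x. (f x, g x)) has_vector_derivative (a, b)) (at x)"
  by (intro has_vector_derivative_Pair) (simp_all add: has_real_derivative_iff_has_vector_derivative)

lemma constant_on_interval_if_derivative_zero:
  assumes "is_interval I" "\<And>u. u \<in> I \<Longrightarrow> (f has_real_derivative 0) (at u)"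
  shows "\<exists>c. \<forall>u\<in>I. f u = c"
  using has_field_derivative_zero_constant[of I f] assms is_interval_convex
  by (metis has_field_derivative_at_within)

lemma sign_constant_on_interval:
  fixes f :: "real \<Rightarrow> real"
  assumes I: "is_interval I" and f: "continuous_on I f" and nz: "\<And>u. u \<in> I \<Longrightarrow> f u \<noteq> 0"
  shows "\<exists>\<epsilon>. (\<epsilon> = 1 \<or> \<epsilon> = -1) \<and> (\<forall>u\<in>I. \<epsilon> * f u > 0)"
proof -
  have iv: "is_interval (f ` I)"
    using connected_continuous_image[OF f] I by (simp add: is_interval_connected_1)
  have no_change: "f b > 0" if ab: "a \<in> I" "b \<in> I" and pos: "f a > 0" for a b
  proof (rule ccontr)
    assume "\<not> f b > 0"
    then have neg: "f b < 0" using nz[OF ab(2)] by linarith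
    have "\<forall>x. f b \<le> x \<longrightarrow> x \<le> f a \<longrightarrow> x \<in> f ` I"
      using iv ab unfolding is_interval_1 by blast
    then have "0 \<in> f ` I" using neg pos by simp
    then show False using nz by auto
  qed
  show ?thesis
  proof (cases "\<exists>a\<in>I. f a > 0")
    case True
    then obtain a where "a \<in> I" "f a > 0" by blast
    then have "\<forall>u\<in>I. 1 * f u > 0" using no_change[OF \<open>a \<in> I\<close>] by simp
    then show ?thesis by blast
  next
    case False
    then have "\<forall>u\<in>I. -1 * f u > 0" using nz by (auto simp: not_less le_less)
    then show ?thesis by blast
  qed
qed

lemma mink_scaleR_left [simp]: "mink (a *\<^sub>R p) q = a * mink p q"
  by (simp add: mink_def algebra_simps)

lemma mink_scaleR_right [simp]: "mink p (a *\<^sub>R q) = a * mink p q"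
  by (simp add: mink_def algebra_simps)

lemma hmul_scaleR: "hmul (a *\<^sub>R p) = a *\<^sub>R hmul p"
  by (simp add: hmul_def)

lemma mink_unit_fst_square: "mink p p = 1 \<Longrightarrow> fst p ^ 2 = 1 + snd p ^ 2"
  by (simp add: mink_def power2_eq_square)

lemma unit_fst_eq_sqrt: "mink p p = 1 \<Longrightarrow> fst p > 0 \<Longrightarrow> sqrt (snd p ^ 2 + 1) = fst p"
  by (rule real_sqrt_unique) (auto simp: mink_unit_fst_square)

lemma fst_neq_0_if_unit:
  assumes "mink p p = 1"
  shows "fst p \<noteq> 0"
proof
  assume "fst p = 0"
  then have "1 + snd p ^ 2 = 0" using mink_unit_fst_square[OF assms] by simp
  moreover have "snd p ^ 2 \<ge> 0" by simp
  ultimately show False by linarith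
qed

lemma hmul_neq_0_if_unit: "mink p p = 1 \<Longrightarrow> hmul p \<noteq> 0"
  by (cases p) (auto simp: mink_def hmul_def zero_prod_def)

lemma orthogonal_to_unit_eq:
  assumes "mink T T = 1" "mink T D = 0"
  shows "D = (- mink D (hmul T)) *\<^sub>R hmul T"
proof -
  obtain a b d1 d2 where T: "T = (a, b)" and D: "D = (d1, d2)" by (cases T, cases D)
  have unit: "a * a - b * b = 1" and orth: "a * d1 = b * d2" using assms by (simp_all add: T D mink_def)
  have "(d2 * a - d1 * b) * b = a * (b * d2) - b * b * d1" by (simp add: algebra_simps)
  also have "\<dots> = a * (a * d1) - b * b * d1" by (simp only: orth)
  also have "\<dots> = (a * a - b * b) * d1" by (simp add: algebra_simps)
  finally have 1: "d1 = (d2 * a - d1 * b) * b" using unit by simp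
  have "(d2 * a - d1 * b) * a = a * a * d2 - b * (a * d1)" by (simp add: algebra_simps)
  also have "\<dots> = a * a * d2 - b * (b * d2)" by (simp only: orth)
  also have "\<dots> = (a * a - b * b) * d2" by (simp add: algebra_simps)
  finally have 2: "d2 = (d2 * a - d1 * b) * a" using unit by simp
  have "- mink D (hmul T) = d2 * a - d1 * b" by (simp add: T D mink_def hmul_def)
  then have "(- mink D (hmul T)) *\<^sub>R hmul T = ((d2 * a - d1 * b) * b, (d2 * a - d1 * b) * a)"
    by (simp add: T hmul_def)
  also have "\<dots> = D" unfolding D by (rule arg_cong2[where f=Pair, OF 1[symmetric] 2[symmetric]])
  finally show ?thesis by (rule sym)
qed

section \<open>Frenet equations\<close>

text \<open>\<open>X\<^sub>u = v T\<close> and \<open>T\<^sub>u = v k N\<close> with \<open>N = hT\<close>: the Frenet equations in a parameter \<open>u\<close> with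
  \<open>v = \<plusminus>ds/du\<close>; the sign of \<open>v\<close> is left free so that the tangent can be reversed.\<close>

definition frenet ::
  "real set \<Rightarrow> (real \<Rightarrow> real \<times> real) \<Rightarrow> (real \<Rightarrow> real) \<Rightarrow> (real \<Rightarrow> real \<times> real) \<Rightarrow> (real \<Rightarrow> real) \<Rightarrow> bool"
  where "frenet I X v T k \<longleftrightarrow> (\<forall>u\<in>I. (X has_vector_derivative v u *\<^sub>R T u) (at u)
           \<and> (T has_vector_derivative (v u * k u) *\<^sub>R hmul (T u)) (at u) \<and> mink (T u) (T u) = 1)"

lemma frenetD:
  assumes "frenet I X v T k" "u \<in> I"
  shows "(X has_vector_derivative v u *\<^sub>R T u) (at u)"
    and "(T has_vector_derivative (v u * k u) *\<^sub>R hmul (T u)) (at u)"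
    and "mink (T u) (T u) = 1"
  using assms by (auto simp: frenet_def)

lemma frenet_curvature_cong: "frenet I X v T k \<Longrightarrow> (\<And>u. u \<in> I \<Longrightarrow> k u = k' u) \<Longrightarrow> frenet I X v T k'"
  by (simp add: frenet_def)

lemma frenet_components:
  assumes "frenet I X v T k" "u \<in> I"
  shows "((\<lambda>u. fst (X u)) has_real_derivative v u * fst (T u)) (at u)"
    and "((\<lambda>u. snd (X u)) has_real_derivative v u * snd (T u)) (at u)"
    and "((\<lambda>u. fst (T u)) has_real_derivative v u * k u * snd (T u)) (at u)"
    and "((\<lambda>u. snd (T u)) has_real_derivative v u * k u * fst (T u)) (at u)"
  using has_real_derivative_fst[OF frenetD(1)[OF assms]] has_real_derivative_snd[OF frenetD(1)[OF assms]]
    has_real_derivative_fst[OF frenetD(2)[OF assms]] has_real_derivative_snd[OF frenetD(2)[OF assms]]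
  by (simp_all add: hmul_def)

lemma frenet_continuous_tangent: "frenet I X v T k \<Longrightarrow> continuous_on I T"
  by (rule continuous_on_vector_derivative[where f'="\<lambda>u. (v u * k u) *\<^sub>R hmul (T u)"])
     (metis frenetD(2) has_vector_derivative_at_within)

lemma curv_eq_if_utan_derivative:
  assumes "(utan X has_vector_derivative (speed X u * k) *\<^sub>R hmul (utan X u)) (at u)"
    and "speed X u \<noteq> 0" and "mink (utan X u) (utan X u) = 1"
  shows "curv X u = k"
proof -
  have "curv X u = (THE k'. (speed X u * k) *\<^sub>R hmul (utan X u) = (speed X u * k') *\<^sub>R hmul (utan X u))"
    by (simp add: curv_def unor_def vector_derivative_at[OF assms(1)])
  also have "\<dots> = k" using hmul_neq_0_if_unit[OF assms(3)] assms(2) by simp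
  finally show ?thesis .
qed

lemma unit_derivative_orthogonal:
  assumes "open I" "u \<in> I" "\<And>w. w \<in> I \<Longrightarrow> mink (T w) (T w) = 1"
    and dT: "(T has_vector_derivative D) (at u)"
  shows "mink (T u) D = 0"
proof -
  have "((\<lambda>w. mink (T w) (T w)) has_real_derivative 2 * mink (T u) D) (at u)"
    unfolding mink_def using has_real_derivative_fst[OF dT] has_real_derivative_snd[OF dT]
    by (auto intro!: derivative_eq_intros simp: algebra_simps)
  moreover have "((\<lambda>w. mink (T w) (T w)) has_real_derivative 0) (at u)"
    by (rule has_field_derivative_transform_within_open[OF DERIV_const assms(1,2)]) (simp add: assms(3))
  ultimately show ?thesis using DERIV_unique by fastforce
qed

lemma frenet_speed_utan_curv:
  assumes I: "open I" and fr: "frenet I X v T k" and pos: "\<And>u. u \<in> I \<Longrightarrow> v u > 0" and u: "u \<in> I"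
  shows "speed X u = v u" and "utan X u = T u" and "curv X u = k u"
proof -
  have speed: "speed X w = v w" if "w \<in> I" for w
    using vector_derivative_at[OF frenetD(1)[OF fr that]] frenetD(3)[OF fr that] pos[OF that]
    by (simp add: speed_def power2_eq_square[symmetric])
  have utan: "utan X w = T w" if "w \<in> I" for w
    using vector_derivative_at[OF frenetD(1)[OF fr that]] speed[OF that] pos[OF that]
    by (simp add: utan_def)
  have "(utan X has_vector_derivative (v u * k u) *\<^sub>R hmul (T u)) (at u)"
    by (rule has_vector_derivative_transform_within_open[OF frenetD(2)[OF fr u] I u]) (simp add: utan)
  then show "curv X u = k u"
    using pos[OF u] frenetD(3)[OF fr u] by (intro curv_eq_if_utan_derivative) (simp_all add: speed[OF u] utan[OF u])
  show "speed X u = v u" "utan X u = T u" using speed[OF u] utan[OF u] .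
qed

lemma translates_with_if_frenet:
  assumes "open I" "frenet I X v T k" "\<And>u. u \<in> I \<Longrightarrow> v u > 0"
    and "\<And>u. u \<in> I \<Longrightarrow> k u = - mink C (hmul (T u))"
  shows "translates_with I X C"
  using frenet_speed_utan_curv[OF assms(1-3)] assms(4) by (simp add: translates_with_def unor_def)

lemma spacelike_curve_if_unit_speed_frenet:
  assumes "open I" "is_interval I" "I \<noteq> {}" and fr: "frenet I X (\<lambda>_. 1) T k" and k: "continuous_on I k"
  shows "spacelike_curve I X"
proof -
  have "continuous_on I (\<lambda>u. k u *\<^sub>R hmul (T u))"
    using frenet_continuous_tangent[OF fr] k unfolding hmul_def by (intro continuous_intros) auto
  then show ?thesis
    using assms(1-3) frenetD[OF fr] unfolding spacelike_curve_def
    by (intro conjI exI[of _ T] exI[of _ "\<lambda>u. k u *\<^sub>R hmul (T u)"]) auto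
qed

lemma frenet_if_spacelike_curve:
  assumes "spacelike_curve I X"
  shows "frenet I X (speed X) (utan X) (curv X)"
  unfolding frenet_def
proof
  fix u assume u: "u \<in> I"
  from assms obtain X' X'' where I: "open I"
    and dX: "\<And>w. w \<in> I \<Longrightarrow> (X has_vector_derivative X' w) (at w)"
    and dX': "\<And>w. w \<in> I \<Longrightarrow> (X' has_vector_derivative X'' w) (at w)"
    and pos: "\<And>w. w \<in> I \<Longrightarrow> mink (X' w) (X' w) > 0"
    unfolding spacelike_curve_def by blast
  define m where "m w = mink (X' w) (X' w)" for w
  have speed: "speed X w = sqrt (m w)" if "w \<in> I" for w
    using vector_derivative_at[OF dX[OF that]] by (simp add: speed_def m_def)
  have utan: "utan X w = (1 / sqrt (m w)) *\<^sub>R X' w" if "w \<in> I" for w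
    using vector_derivative_at[OF dX[OF that]] speed[OF that] by (simp add: utan_def)
  have unit: "mink (utan X w) (utan X w) = 1" if "w \<in> I" for w
    using pos[OF that] by (simp add: utan[OF that] m_def[symmetric])
  have speed_pos: "speed X u > 0" using pos[OF u] by (simp add: speed[OF u] m_def)
  have "(m has_real_derivative 2 * mink (X' u) (X'' u)) (at u)"
    unfolding m_def[abs_def] mink_def
    using has_real_derivative_fst[OF dX'[OF u]] has_real_derivative_snd[OF dX'[OF u]]
    by (auto intro!: derivative_eq_intros simp: algebra_simps)
  then have "((\<lambda>w. 1 / sqrt (m w)) has_real_derivative
      - (2 * mink (X' u) (X'' u) / (2 * sqrt (m u))) / (sqrt (m u) * sqrt (m u))) (at u)"
    using pos[OF u] unfolding m_def by (auto intro!: derivative_eq_intros simp: field_simps)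
  then obtain D where "((\<lambda>w. (1 / sqrt (m w)) *\<^sub>R X' w) has_vector_derivative D) (at u)"
    using has_vector_derivative_scaleR[OF _ dX'[OF u]] by blast
  then have dT: "(utan X has_vector_derivative D) (at u)"
    by (rule has_vector_derivative_transform_within_open[OF _ I u]) (simp add: utan)
  define M where "M = - mink D (hmul (utan X u))"
  have D: "D = M *\<^sub>R hmul (utan X u)"
    unfolding M_def using orthogonal_to_unit_eq[OF unit[OF u] unit_derivative_orthogonal[OF I u unit dT]] .
  have "curv X u = M / speed X u"
    using dT D speed_pos unit[OF u] by (intro curv_eq_if_utan_derivative) simp_all
  then have "(utan X has_vector_derivative (speed X u * curv X u) *\<^sub>R hmul (utan X u)) (at u)"
    using dT D speed_pos by simp
  moreover have "speed X u *\<^sub>R utan X u = X' u"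
    using speed_pos by (simp add: utan[OF u] speed[OF u])
  ultimately show "(X has_vector_derivative speed X u *\<^sub>R utan X u) (at u)
      \<and> (utan X has_vector_derivative (speed X u * curv X u) *\<^sub>R hmul (utan X u)) (at u)
      \<and> mink (utan X u) (utan X u) = 1"
    using dX[OF u] unit[OF u] by simp
qed

lemma frenet_reverse:
  assumes "frenet I X v T k" "\<epsilon> = 1 \<or> \<epsilon> = -1"
  shows "frenet I X (\<lambda>u. \<epsilon> * v u) (\<lambda>u. \<epsilon> *\<^sub>R T u) (\<lambda>u. \<epsilon> * k u)"
  unfolding frenet_def
proof
  fix u assume u: "u \<in> I"
  have "((\<lambda>u. \<epsilon> *\<^sub>R T u) has_vector_derivative \<epsilon> *\<^sub>R ((v u * k u) *\<^sub>R hmul (T u))) (at u)"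
    using frenetD(2)[OF assms(1) u] by (rule bounded_linear.has_vector_derivative[OF bounded_linear_scaleR_right])
  then show "(X has_vector_derivative (\<epsilon> * v u) *\<^sub>R \<epsilon> *\<^sub>R T u) (at u)
      \<and> ((\<lambda>u. \<epsilon> *\<^sub>R T u) has_vector_derivative (\<epsilon> * v u * (\<epsilon> * k u)) *\<^sub>R hmul (\<epsilon> *\<^sub>R T u)) (at u)
      \<and> mink (\<epsilon> *\<^sub>R T u) (\<epsilon> *\<^sub>R T u) = 1"
    using frenetD[OF assms(1) u] assms(2) by (auto simp: hmul_scaleR)
qed

lemma frenet_linear_image:
  assumes fr: "frenet I X v T k" and L: "mink_isometry L"
    and hL: "\<And>p. hmul (L p) = \<delta> *\<^sub>R L (hmul p)" and \<delta>: "\<delta> = 1 \<or> \<delta> = -1" and c: "c > 0"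
  shows "frenet I (\<lambda>u. c *\<^sub>R L (X u)) (\<lambda>u. c * v u) (\<lambda>u. L (T u)) (\<lambda>u. \<delta> * k u / c)"
  unfolding frenet_def
proof
  fix u assume u: "u \<in> I"
  have lin: "linear L" and bl: "bounded_linear L" and mL: "\<And>p q. mink (L p) (L q) = mink p q"
    using L by (auto simp: mink_isometry_def linear_conv_bounded_linear)
  have "((\<lambda>u. c *\<^sub>R L (X u)) has_vector_derivative c *\<^sub>R L (v u *\<^sub>R T u)) (at u)"
    by (intro bounded_linear.has_vector_derivative[OF bounded_linear_scaleR_right]
        bounded_linear.has_vector_derivative[OF bl] frenetD(1)[OF fr u])
  moreover have "((\<lambda>u. L (T u)) has_vector_derivative L ((v u * k u) *\<^sub>R hmul (T u))) (at u)"
    by (intro bounded_linear.has_vector_derivative[OF bl] frenetD(2)[OF fr u])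
  moreover have "L ((v u * k u) *\<^sub>R hmul (T u)) = (c * v u * (\<delta> * k u / c)) *\<^sub>R hmul (L (T u))"
    using \<delta> c by (auto simp: hL linear_scale[OF lin])
  moreover have "c *\<^sub>R L (v u *\<^sub>R T u) = (c * v u) *\<^sub>R L (T u)"
    by (simp add: linear_scale[OF lin])
  moreover have "mink (L (T u)) (L (T u)) = 1"
    using frenetD(3)[OF fr u] by (simp add: mL)
  ultimately show "((\<lambda>u. c *\<^sub>R L (X u)) has_vector_derivative (c * v u) *\<^sub>R L (T u)) (at u)
      \<and> ((\<lambda>u. L (T u)) has_vector_derivative (c * v u * (\<delta> * k u / c)) *\<^sub>R hmul (L (T u))) (at u)
      \<and> mink (L (T u)) (L (T u)) = 1"
    by metis
qed

section \<open>The three model curves\<close>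

definition gamma1_tangent :: "real \<Rightarrow> real \<times> real"
  where "gamma1_tangent s = (1 / cos s, sin s / cos s)"

definition gamma2_tangent :: "real \<Rightarrow> real \<times> real"
  where "gamma2_tangent s = (cosh s / sinh s, - 1 / sinh s)"

definition gamma3_tangent :: "real \<Rightarrow> real \<times> real"
  where "gamma3_tangent s = (s / 4 + 1 / s, s / 4 - 1 / s)"

lemma cos_gt_0_half_pi: "s \<in> {-pi/2<..<pi/2} \<Longrightarrow> cos s > 0"
  by (auto intro!: cos_gt_zero_pi)

lemma one_plus_sin_gt_0_half_pi:
  assumes "s \<in> {-pi/2<..<pi/2}"
  shows "1 + sin s > 0"
proof -
  have "sin s \<noteq> -1"
  proof
    assume "sin s = -1"
    then have "cos s ^ 2 = 0" using sin_cos_squared_add[of s] by simp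
    then show False using cos_gt_0_half_pi[OF assms] by simp
  qed
  then show ?thesis using sin_ge_minus_one[of s] by linarith
qed

lemma frenet_gamma1: "frenet {-pi/2<..<pi/2} gamma1 (\<lambda>_. 1) gamma1_tangent (\<lambda>s. 1 / cos s)"
  unfolding frenet_def
proof (intro ballI conjI)
  fix s :: real assume s: "s \<in> {-pi/2<..<pi/2}"
  note c = cos_gt_0_half_pi[OF s] and p = one_plus_sin_gt_0_half_pi[OF s]
  have e: "cos s * cos s + (1 + sin s) * sin s = 1 + sin s"
    using sin_cos_squared_add3[of s] by (simp add: algebra_simps)
  have "((\<lambda>s. ln ((1 + sin s) / cos s)) has_real_derivative 1 / cos s) (at s)"
    using c p e by (auto intro!: derivative_eq_intros simp: field_simps)
       (metis (no_types) c p distrib_left mult_cancel_left1 mult_pos_pos order_less_irrefl)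
  moreover have "((\<lambda>s. - ln (cos s)) has_real_derivative sin s / cos s) (at s)"
    using c by (auto intro!: derivative_eq_intros)
  ultimately show "(gamma1 has_vector_derivative 1 *\<^sub>R gamma1_tangent s) (at s)"
    unfolding gamma1_def[abs_def] gamma1_tangent_def by (simp add: has_vector_derivative_real_Pair)
  have "((\<lambda>s. 1 / cos s) has_real_derivative sin s / cos s / cos s) (at s)"
    using c by (auto intro!: derivative_eq_intros simp: field_simps power2_eq_square)
  moreover have "((\<lambda>s. sin s / cos s) has_real_derivative 1 / cos s / cos s) (at s)"
    using c sin_cos_squared_add3[of s] by (auto intro!: derivative_eq_intros simp: field_simps power2_eq_square)
  ultimately show "(gamma1_tangent has_vector_derivative (1 * (1 / cos s)) *\<^sub>R hmul (gamma1_tangent s)) (at s)"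
    unfolding gamma1_tangent_def[abs_def] hmul_def by (simp add: has_vector_derivative_real_Pair)
  show "mink (gamma1_tangent s) (gamma1_tangent s) = 1"
    using c sin_cos_squared_add3[of s] by (simp add: gamma1_tangent_def mink_def field_simps)
qed

lemma frenet_gamma2: "frenet {0<..} gamma2 (\<lambda>_. 1) gamma2_tangent (\<lambda>s. 1 / sinh s)"
  unfolding frenet_def
proof (intro ballI conjI)
  fix s :: real assume "s \<in> {0<..}"
  then have s: "s > 0" and p: "sinh s > 0" by simp_all
  have sq: "sqrt ((1 / sinh s)\<^sup>2 + 1) = cosh s / sinh s"
    using s by (intro real_sqrt_unique) (auto simp: field_simps cosh_square_eq)
  have "((\<lambda>s. ln (sinh s)) has_real_derivative cosh s / sinh s) (at s)"
    using p by (auto intro!: derivative_eq_intros)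
  moreover have "((\<lambda>s. arsinh (1 / sinh s)) has_real_derivative -1 / sinh s) (at s)"
  proof -
    have "((\<lambda>s. 1 / sinh s) has_real_derivative - cosh s / (sinh s)\<^sup>2) (at s)"
      using p by (auto intro!: derivative_eq_intros simp: field_simps power2_eq_square)
    from DERIV_chain2[OF arsinh_real_has_field_derivative this]
    show ?thesis using p sq cosh_real_pos[of s] by (simp add: field_simps power2_eq_square)
  qed
  ultimately show "(gamma2 has_vector_derivative 1 *\<^sub>R gamma2_tangent s) (at s)"
    unfolding gamma2_def[abs_def] gamma2_tangent_def by (simp add: has_vector_derivative_real_Pair)
  have "((\<lambda>s. cosh s / sinh s) has_real_derivative -1 / sinh s / sinh s) (at s)"
    using p cosh_square_eq[of s] by (auto intro!: derivative_eq_intros simp: field_simps power2_eq_square)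
  moreover have "((\<lambda>s. -1 / sinh s) has_real_derivative cosh s / sinh s / sinh s) (at s)"
    using p by (auto intro!: derivative_eq_intros simp: field_simps power2_eq_square)
  ultimately show "(gamma2_tangent has_vector_derivative (1 * (1 / sinh s)) *\<^sub>R hmul (gamma2_tangent s)) (at s)"
    unfolding gamma2_tangent_def[abs_def] hmul_def by (simp add: has_vector_derivative_real_Pair)
  show "mink (gamma2_tangent s) (gamma2_tangent s) = 1"
    using cosh_square_eq[of s] p by (simp add: gamma2_tangent_def mink_def field_simps power2_eq_square)
qed

lemma frenet_gamma3: "frenet {0<..} gamma3 (\<lambda>_. 1) gamma3_tangent (\<lambda>s. 1 / s)"
  unfolding frenet_def
proof (intro ballI conjI)
  fix s :: real assume "s \<in> {0<..}"
  then have s: "s > 0" by simp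
  have "((\<lambda>s. (s\<^sup>2 / 4 + 2 * ln (s / 2)) / 2) has_real_derivative s / 4 + 1 / s) (at s)"
    using s by (auto intro!: derivative_eq_intros simp: field_simps)
  moreover have "((\<lambda>s. (s\<^sup>2 / 4 - 2 * ln (s / 2)) / 2) has_real_derivative s / 4 - 1 / s) (at s)"
    using s by (auto intro!: derivative_eq_intros simp: field_simps)
  ultimately show "(gamma3 has_vector_derivative 1 *\<^sub>R gamma3_tangent s) (at s)"
    unfolding gamma3_def[abs_def] gamma3_tangent_def by (simp add: has_vector_derivative_real_Pair)
  have "((\<lambda>s. s / 4 + 1 / s) has_real_derivative 1 / s * (s / 4 - 1 / s)) (at s)"
    using s by (auto intro!: derivative_eq_intros simp: field_simps power2_eq_square)
  moreover have "((\<lambda>s. s / 4 - 1 / s) has_real_derivative 1 / s * (s / 4 + 1 / s)) (at s)"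
    using s by (auto intro!: derivative_eq_intros simp: field_simps power2_eq_square)
  ultimately show "(gamma3_tangent has_vector_derivative (1 * (1 / s)) *\<^sub>R hmul (gamma3_tangent s)) (at s)"
    unfolding gamma3_tangent_def[abs_def] hmul_def by (simp add: has_vector_derivative_real_Pair)
  show "mink (gamma3_tangent s) (gamma3_tangent s) = 1"
    using s by (simp add: gamma3_tangent_def mink_def field_simps power2_eq_square)
qed

lemma gamma1_image: "gamma1 ` {-pi/2<..<pi/2} = Gamma1"
proof
  show "gamma1 ` {-pi/2<..<pi/2} \<subseteq> Gamma1"
  proof
    fix p assume "p \<in> gamma1 ` {-pi/2<..<pi/2}"
    then obtain s where s: "s \<in> {-pi/2<..<pi/2}" and p: "p = gamma1 s" by auto
    note c = cos_gt_0_half_pi[OF s] and q = one_plus_sin_gt_0_half_pi[OF s]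
    have e: "cos s * cos s + (1 + sin s) * (1 + sin s) = 2 * (1 + sin s)"
      using sin_cos_squared_add3[of s] by (simp add: algebra_simps)
    have "cosh (ln ((1 + sin s) / cos s)) = ((1 + sin s) / cos s + cos s / (1 + sin s)) / 2"
      using c q by (simp add: cosh_ln_real)
    also have "\<dots> = 1 / cos s"
      using c q e by (simp add: field_simps)
    finally show "p \<in> Gamma1"
      using c by (simp add: p gamma1_def Gamma1_def exp_minus ln_inverse[symmetric] inverse_eq_divide)
  qed
next
  show "Gamma1 \<subseteq> gamma1 ` {-pi/2<..<pi/2}"
  proof
    fix p assume "p \<in> Gamma1"
    then obtain x y where p: "p = (x, y)" and e: "cosh x = exp y" by (auto simp: Gamma1_def)
    define s where "s = arctan (sinh x)"
    have sq: "sqrt (1 + (sinh x)\<^sup>2) = cosh x"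
      by (rule real_sqrt_unique) (simp_all add: cosh_square_eq)
    have cs: "cos s = 1 / cosh x" unfolding s_def cos_arctan sq ..
    have sn: "sin s = sinh x / cosh x" unfolding s_def sin_arctan sq ..
    have "(1 + sin s) / cos s = cosh x + sinh x"
      using cosh_real_pos[of x] by (simp add: cs sn field_simps)
    also have "\<dots> = exp x" by (rule cosh_plus_sinh)
    finally have "gamma1 s = p" using e by (simp add: gamma1_def p cs ln_div)
    moreover have "s \<in> {-pi/2<..<pi/2}" unfolding s_def using arctan_bounded by auto
    ultimately show "p \<in> gamma1 ` {-pi/2<..<pi/2}" by blast
  qed
qed

lemma gamma2_image: "gamma2 ` {0<..} = Gamma2"
proof
  show "gamma2 ` {0<..} \<subseteq> Gamma2"
    by (auto simp: gamma2_def Gamma2_def exp_minus inverse_eq_divide)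
next
  show "Gamma2 \<subseteq> gamma2 ` {0<..}"
  proof
    fix p assume "p \<in> Gamma2"
    then obtain x y where p: "p = (x, y)" and e: "sinh y = exp (- x)" by (auto simp: Gamma2_def)
    define s where "s = arsinh (exp x)"
    have "sinh s = exp x" by (simp add: s_def)
    moreover have "arsinh (exp (- x)) = y" by (metis e arsinh_sinh_real)
    ultimately have "s > 0" "gamma2 s = p"
      using sinh_real_pos_iff[of s] by (auto simp: gamma2_def p exp_minus inverse_eq_divide)
    then show "p \<in> gamma2 ` {0<..}" by force
  qed
qed

lemma mem_Gamma3_iff: "p \<in> Gamma3 \<longleftrightarrow> fst p + snd p = exp (fst p - snd p)"
  by (cases p) (simp add: Gamma3_def)

lemma gamma3_image: "gamma3 ` {0<..} = Gamma3"
proof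
  show "gamma3 ` {0<..} \<subseteq> Gamma3"
  proof
    fix p assume "p \<in> gamma3 ` {0<..}"
    then obtain s :: real where s: "s > 0" and p: "p = gamma3 s" by auto
    have "exp (2 * ln (s / 2)) = (s / 2)\<^sup>2" using s by (simp add: exp_double)
    then show "p \<in> Gamma3" by (simp add: p gamma3_def Gamma3_def field_simps power2_eq_square)
  qed
next
  show "Gamma3 \<subseteq> gamma3 ` {0<..}"
  proof
    fix p assume "p \<in> Gamma3"
    then obtain x y where p: "p = (x, y)" and e: "x + y = exp (x - y)" by (auto simp: Gamma3_def)
    define s where "s = 2 * exp ((x - y) / 2)"
    have l: "ln (s / 2) = (x - y) / 2" by (simp add: s_def)
    have q: "s\<^sup>2 / 4 = x + y" unfolding e s_def
      by (simp add: power_mult_distrib exp_double[symmetric])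
    have "gamma3 s = p" unfolding gamma3_def l q p by (simp add: field_simps)
    moreover have "s > 0" by (simp add: s_def)
    ultimately show "p \<in> gamma3 ` {0<..}" by force
  qed
qed

lemma gamma1_translator:
  "spacelike_curve {-pi/2<..<pi/2} gamma1 \<and> gamma1 ` {-pi/2<..<pi/2} = Gamma1
   \<and> (\<forall>s\<in>{-pi/2<..<pi/2}. speed gamma1 s = 1 \<and> curv gamma1 s = 1 / cos s)
   \<and> translates_with {-pi/2<..<pi/2} gamma1 (0, 1)"
proof (intro conjI ballI gamma1_image)
  have "\<forall>s\<in>{-pi/2<..<pi/2}. cos s \<noteq> 0" using cos_gt_0_half_pi by force
  then have "continuous_on {-pi/2<..<pi/2} (\<lambda>s. 1 / cos s)" by (intro continuous_intros) auto
  moreover have "\<not> pi \<le> 0" using pi_gt_zero by linarith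
  ultimately show "spacelike_curve {-pi/2<..<pi/2} gamma1"
    by (intro spacelike_curve_if_unit_speed_frenet[OF _ _ _ frenet_gamma1]) auto
  show "translates_with {-pi/2<..<pi/2} gamma1 (0, 1)"
    by (rule translates_with_if_frenet[OF _ frenet_gamma1])
       (simp_all add: mink_def hmul_def gamma1_tangent_def)
  fix s :: real assume "s \<in> {-pi/2<..<pi/2}"
  then show "speed gamma1 s = 1" "curv gamma1 s = 1 / cos s"
    using frenet_speed_utan_curv[OF _ frenet_gamma1] by simp_all
qed

lemma gamma2_translator:
  "spacelike_curve {0<..} gamma2 \<and> gamma2 ` {0<..} = Gamma2
   \<and> (\<forall>s\<in>{0<..}. speed gamma2 s = 1 \<and> curv gamma2 s = 1 / sinh s)
   \<and> translates_with {0<..} gamma2 (1, 0)"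
proof (intro conjI ballI gamma2_image)
  have "continuous_on {0<..} (\<lambda>s::real. 1 / sinh s)" by (intro continuous_intros) auto
  then show "spacelike_curve {0<..} gamma2"
    by (intro spacelike_curve_if_unit_speed_frenet[OF _ _ _ frenet_gamma2]) (auto intro!: exI[of _ 1])
  show "translates_with {0<..} gamma2 (1, 0)"
    by (rule translates_with_if_frenet[OF _ frenet_gamma2])
       (simp_all add: mink_def hmul_def gamma2_tangent_def)
  fix s :: real assume "s \<in> {0<..}"
  then show "speed gamma2 s = 1" "curv gamma2 s = 1 / sinh s"
    using frenet_speed_utan_curv[OF _ frenet_gamma2] by simp_all
qed

lemma gamma3_translator:
  "spacelike_curve {0<..} gamma3 \<and> gamma3 ` {0<..} = Gamma3
   \<and> (\<forall>s\<in>{0<..}. speed gamma3 s = 1 \<and> curv gamma3 s = 1 / s)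
   \<and> translates_with {0<..} gamma3 (1/2, 1/2)"
proof (intro conjI ballI gamma3_image)
  have "continuous_on {0<..} (\<lambda>s::real. 1 / s)" by (intro continuous_intros) auto
  then show "spacelike_curve {0<..} gamma3"
    by (intro spacelike_curve_if_unit_speed_frenet[OF _ _ _ frenet_gamma3]) (auto intro!: exI[of _ 1])
  show "translates_with {0<..} gamma3 (1/2, 1/2)"
    by (rule translates_with_if_frenet[OF _ frenet_gamma3])
       (simp_all add: mink_def hmul_def gamma3_tangent_def field_simps)
  fix s :: real assume "s \<in> {0<..}"
  then show "speed gamma3 s = 1" "curv gamma3 s = 1 / s"
    using frenet_speed_utan_curv[OF _ frenet_gamma3] by simp_all
qed

section \<open>Classification of translators\<close>

text \<open>For \<open>a\<^sup>2 - b\<^sup>2 = 1\<close> a boost, followed by the reflection \<open>y \<mapsto> -y\<close> when \<open>\<sigma> = -1\<close>.\<close>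

definition lorentz_map :: "real \<Rightarrow> real \<Rightarrow> real \<Rightarrow> real \<times> real \<Rightarrow> real \<times> real"
  where "lorentz_map a b \<sigma> p = (a * fst p + b * snd p, \<sigma> * (b * fst p + a * snd p))"

lemma mink_isometry_lorentz_map:
  assumes "a * a - b * b = 1" "\<sigma> = 1 \<or> \<sigma> = -1"
  shows "mink_isometry (lorentz_map a b \<sigma>)"
  unfolding mink_isometry_def
proof (intro conjI allI)
  show "linear (lorentz_map a b \<sigma>)"
    by (rule linearI) (auto simp: lorentz_map_def algebra_simps)
  fix p q :: "real \<times> real"
  have "mink (lorentz_map a b \<sigma> p) (lorentz_map a b \<sigma> q)
      = (a * a - b * b) * (fst p * fst q - snd p * snd q)"
    using assms(2) by (auto simp: lorentz_map_def mink_def algebra_simps)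
  then show "mink (lorentz_map a b \<sigma> p) (lorentz_map a b \<sigma> q) = mink p q"
    using assms(1) by (simp add: mink_def)
qed

lemma hmul_lorentz_map:
  "\<sigma> = 1 \<or> \<sigma> = -1 \<Longrightarrow> hmul (lorentz_map a b \<sigma> p) = \<sigma> *\<^sub>R lorentz_map a b \<sigma> (hmul p)"
  by (auto simp: lorentz_map_def hmul_def algebra_simps)

lemma similarity_scaled_isometry: "c > 0 \<Longrightarrow> mink_isometry L \<Longrightarrow> similarity (\<lambda>p. c *\<^sub>R L p)"
  unfolding similarity_def by (rule exI[of _ c], rule exI[of _ L], rule exI[of _ 0]) simp

lemma similarity_reflection_translation:
  assumes "\<sigma>\<^sub>1 = 1 \<or> \<sigma>\<^sub>1 = -1" "\<sigma>\<^sub>2 = 1 \<or> \<sigma>\<^sub>2 = -1"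
  shows "similarity (\<lambda>p. (\<sigma>\<^sub>1 * fst p + b\<^sub>1, \<sigma>\<^sub>2 * snd p + b\<^sub>2))"
proof -
  have "mink_isometry (lorentz_map \<sigma>\<^sub>1 0 (\<sigma>\<^sub>1 * \<sigma>\<^sub>2))"
    using assms by (intro mink_isometry_lorentz_map) auto
  moreover have "(\<lambda>p. (\<sigma>\<^sub>1 * fst p + b\<^sub>1, \<sigma>\<^sub>2 * snd p + b\<^sub>2))
      = (\<lambda>p. 1 *\<^sub>R lorentz_map \<sigma>\<^sub>1 0 (\<sigma>\<^sub>1 * \<sigma>\<^sub>2) p + (b\<^sub>1, b\<^sub>2))"
    using assms by (auto simp: lorentz_map_def)
  ultimately show ?thesis
    unfolding similarity_def by (intro exI[of _ 1] exI[of _ "lorentz_map \<sigma>\<^sub>1 0 (\<sigma>\<^sub>1 * \<sigma>\<^sub>2)"] exI[of _ "(b\<^sub>1, b\<^sub>2)"]) simp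
qed

lemma similarity_compose:
  assumes "similarity F" "similarity G"
  shows "similarity (F \<circ> G)"
proof -
  obtain c L b where c: "c > 0" and L: "mink_isometry L" and F: "F = (\<lambda>p. c *\<^sub>R L p + b)"
    using assms(1) unfolding similarity_def by blast
  obtain d M e where d: "d > 0" and M: "mink_isometry M" and G: "G = (\<lambda>p. d *\<^sub>R M p + e)"
    using assms(2) unfolding similarity_def by blast
  have lL: "linear L" and mL: "\<And>p q. mink (L p) (L q) = mink p q"
    and lM: "linear M" and mM: "\<And>p q. mink (M p) (M q) = mink p q"
    using L M unfolding mink_isometry_def by blast+
  have "mink_isometry (L \<circ> M)"
    unfolding mink_isometry_def using linear_compose[OF lM lL] by (simp add: mL mM)
  moreover have "F \<circ> G = (\<lambda>p. (c * d) *\<^sub>R (L \<circ> M) p + (c *\<^sub>R L e + b))"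
    by (simp add: F G comp_def linear_add[OF lL] linear_scale[OF lL] scaleR_add_right add.assoc)
  moreover have "c * d > 0" using c d by simp
  ultimately show ?thesis unfolding similarity_def by blast
qed

lemma similar_image_subset_trans:
  "similarity F \<Longrightarrow> F ` Y ` I \<subseteq> G \<Longrightarrow> similarity H \<Longrightarrow> (\<And>u. u \<in> I \<Longrightarrow> Y u = H (X u))
    \<Longrightarrow> \<exists>F'. similarity F' \<and> F' ` X ` I \<subseteq> G"
proof (intro exI conjI)
  assume "similarity F" "similarity H"
  then show "similarity (F \<circ> H)" by (rule similarity_compose)
  assume sub: "F ` Y ` I \<subseteq> G" and Y: "\<And>u. u \<in> I \<Longrightarrow> Y u = H (X u)"
  show "(F \<circ> H) ` X ` I \<subseteq> G"
  proof
    fix q assume "q \<in> (F \<circ> H) ` X ` I"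
    then obtain u where "u \<in> I" "q = F (Y u)" using Y by auto
    then show "q \<in> G" using sub by blast
  qed
qed

lemma similar_image_subsetI:
  "similarity F \<Longrightarrow> (\<And>u. u \<in> I \<Longrightarrow> F (Y u) \<in> G) \<Longrightarrow> \<exists>F. similarity F \<and> F ` Y ` I \<subseteq> G"
  by blast

lemma translating_frenet_normal_form:
  assumes I: "is_interval I" and fr: "frenet I X v T (\<lambda>u. - mink C (hmul (T u)))"
    and L: "mink_isometry L" and hL: "\<And>p. hmul (L p) = \<delta> *\<^sub>R L (hmul p)"
    and \<delta>: "\<delta> = 1 \<or> \<delta> = -1" and c: "c > 0"
  obtains w S where "frenet I (\<lambda>u. c *\<^sub>R L (X u)) w S (\<lambda>u. - mink ((1 / c) *\<^sub>R L C) (hmul (S u)))"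
    and "\<And>u. u \<in> I \<Longrightarrow> fst (S u) > 0"
    and "\<And>u. u \<in> I \<Longrightarrow> mink ((1 / c) *\<^sub>R L C) (hmul (S u)) = 0 \<longleftrightarrow> mink C (hmul (T u)) = 0"
proof -
  define C' where "C' = (1 / c) *\<^sub>R L C"
  have mL: "mink (L p) (L q) = mink p q" for p q using L unfolding mink_isometry_def by blast
  have curvature: "mink C' (hmul (L p)) = (\<delta> / c) * mink C (hmul p)" for p
    by (simp add: C'_def hL mL)
  have "\<delta> * - mink C (hmul (T u)) / c = - mink C' (hmul (L (T u)))" for u
    by (simp add: curvature)
  with frenet_linear_image[where L = L and \<delta> = \<delta>, OF fr L hL \<delta> c]
  have frL: "frenet I (\<lambda>u. c *\<^sub>R L (X u)) (\<lambda>u. c * v u) (\<lambda>u. L (T u)) (\<lambda>u. - mink C' (hmul (L (T u))))"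
    by (rule frenet_curvature_cong)
  have "bounded_linear L" using L by (simp add: mink_isometry_def linear_conv_bounded_linear)
  then have "continuous_on I (\<lambda>u. L (T u))"
    by (intro continuous_on_compose2[OF linear_continuous_on frenet_continuous_tangent[OF fr]]) auto
  then have "continuous_on I (\<lambda>u. fst (L (T u)))" by (rule continuous_on_fst)
  moreover have "fst (L (T u)) \<noteq> 0" if "u \<in> I" for u
    using fst_neq_0_if_unit[OF frenetD(3)[OF frL that]] .
  \<comment> \<open>the \<open>x\<close>-component of a unit space-like vector never vanishes, so \<open>\<epsilon>\<close> can orient it\<close>
  ultimately obtain \<epsilon> where \<epsilon>: "\<epsilon> = 1 \<or> \<epsilon> = -1" and pos: "\<forall>u\<in>I. \<epsilon> * fst (L (T u)) > 0"
    using sign_constant_on_interval[OF I] by blast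
  have "frenet I (\<lambda>u. c *\<^sub>R L (X u)) (\<lambda>u. \<epsilon> * (c * v u)) (\<lambda>u. \<epsilon> *\<^sub>R L (T u))
      (\<lambda>u. \<epsilon> * - mink C' (hmul (L (T u))))"
    by (rule frenet_reverse[OF frL \<epsilon>])
  then have "frenet I (\<lambda>u. c *\<^sub>R L (X u)) (\<lambda>u. \<epsilon> * (c * v u)) (\<lambda>u. \<epsilon> *\<^sub>R L (T u))
      (\<lambda>u. - mink C' (hmul (\<epsilon> *\<^sub>R L (T u))))"
    by (rule frenet_curvature_cong) (simp add: hmul_scaleR)
  moreover have "mink C' (hmul (\<epsilon> *\<^sub>R L (T u))) = 0 \<longleftrightarrow> mink C (hmul (T u)) = 0" for u
    using \<epsilon> \<delta> c by (auto simp: hmul_scaleR curvature)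
  ultimately show thesis using that pos unfolding C'_def by simp
qed

lemma translating_frenet_timelike:
  assumes I: "is_interval I" and fr: "frenet I Y w S (\<lambda>u. - mink (0, 1) (hmul (S u)))"
    and pos: "\<And>u. u \<in> I \<Longrightarrow> fst (S u) > 0"
  shows "\<exists>F. similarity F \<and> F ` Y ` I \<subseteq> Gamma1"
proof -
  have k: "- mink (0, 1) (hmul p) = fst p" for p by (simp add: mink_def hmul_def)
  note d = frenet_components[OF fr, unfolded k]
  have sq: "sqrt (snd (S u) ^ 2 + 1) = fst (S u)" if "u \<in> I" for u
    by (rule unit_fst_eq_sqrt[OF frenetD(3)[OF fr that] pos[OF that]])
  have "\<exists>a. \<forall>u\<in>I. fst (Y u) - arsinh (snd (S u)) = a"
  proof (rule constant_on_interval_if_derivative_zero[OF I])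
    fix u assume u: "u \<in> I"
    have "((\<lambda>u. arsinh (snd (S u))) has_real_derivative
        1 / sqrt (snd (S u) ^ 2 + 1) * (w u * fst (S u) * fst (S u))) (at u)"
      by (rule DERIV_chain2[OF arsinh_real_has_field_derivative d(4)[OF u]])
    then have "((\<lambda>u. arsinh (snd (S u))) has_real_derivative w u * fst (S u)) (at u)"
      using pos[OF u] by (simp add: sq[OF u])
    from DERIV_diff[OF d(1)[OF u] this]
    show "((\<lambda>u. fst (Y u) - arsinh (snd (S u))) has_real_derivative 0) (at u)" by simp
  qed
  then obtain a where a: "\<And>u. u \<in> I \<Longrightarrow> fst (Y u) - arsinh (snd (S u)) = a" by blast
  have "\<exists>b. \<forall>u\<in>I. snd (Y u) - ln (fst (S u)) = b"
  proof (rule constant_on_interval_if_derivative_zero[OF I])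
    fix u assume u: "u \<in> I"
    show "((\<lambda>u. snd (Y u) - ln (fst (S u))) has_real_derivative 0) (at u)"
      using d(2)[OF u] d(3)[OF u] pos[OF u] by (auto intro!: derivative_eq_intros)
  qed
  then obtain b where b: "\<And>u. u \<in> I \<Longrightarrow> snd (Y u) - ln (fst (S u)) = b" by blast
  show ?thesis
  proof (rule similar_image_subsetI[OF similarity_reflection_translation[of 1 1 "- a" "- b"]])
    fix u assume u: "u \<in> I"
    have "cosh (fst (Y u) - a) = fst (S u)"
      using a[OF u] sq[OF u] by (simp add: cosh_arsinh_real algebra_simps)
    also have "\<dots> = exp (snd (Y u) - b)" using b[OF u] pos[OF u] by (simp add: algebra_simps)
    finally show "(1 * fst (Y u) + - a, 1 * snd (Y u) + - b) \<in> Gamma1" by (simp add: Gamma1_def)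
  qed simp_all
qed

lemma translating_frenet_spacelike:
  assumes I: "is_interval I" and fr: "frenet I Y w S (\<lambda>u. - mink (1, 0) (hmul (S u)))"
    and pos: "\<And>u. u \<in> I \<Longrightarrow> fst (S u) > 0"
    and curved: "u\<^sub>0 \<in> I" "mink (1, 0) (hmul (S u\<^sub>0)) \<noteq> 0"
  shows "\<exists>F. similarity F \<and> F ` Y ` I \<subseteq> Gamma2"
proof -
  have k: "- mink (1, 0) (hmul p) = - snd p" for p by (simp add: mink_def hmul_def)
  note d = frenet_components[OF fr, unfolded k]
  have "\<exists>K. \<forall>u\<in>I. snd (S u) * exp (fst (Y u)) = K"
  proof (rule constant_on_interval_if_derivative_zero[OF I])
    fix u assume u: "u \<in> I"
    show "((\<lambda>u. snd (S u) * exp (fst (Y u))) has_real_derivative 0) (at u)"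
      using d(1)[OF u] d(4)[OF u] by (auto intro!: derivative_eq_intros simp: algebra_simps)
  qed
  then obtain K where K: "\<And>u. u \<in> I \<Longrightarrow> snd (S u) * exp (fst (Y u)) = K" by blast
  have "\<exists>D. \<forall>u\<in>I. snd (Y u) + arsinh (snd (S u)) = D"
  proof (rule constant_on_interval_if_derivative_zero[OF I])
    fix u assume u: "u \<in> I"
    have "((\<lambda>u. arsinh (snd (S u))) has_real_derivative
        1 / sqrt (snd (S u) ^ 2 + 1) * (w u * - snd (S u) * fst (S u))) (at u)"
      by (rule DERIV_chain2[OF arsinh_real_has_field_derivative d(4)[OF u]])
    then have "((\<lambda>u. arsinh (snd (S u))) has_real_derivative - (w u * snd (S u))) (at u)"
      using pos[OF u] by (simp add: unit_fst_eq_sqrt[OF frenetD(3)[OF fr u] pos[OF u]])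
    from DERIV_add[OF d(2)[OF u] this]
    show "((\<lambda>u. snd (Y u) + arsinh (snd (S u))) has_real_derivative 0) (at u)" by simp
  qed
  then obtain D where D: "\<And>u. u \<in> I \<Longrightarrow> snd (Y u) + arsinh (snd (S u)) = D" by blast
  have "K \<noteq> 0" using K[OF curved(1)] curved(2) by (auto simp: mink_def hmul_def)
  \<comment> \<open>\<open>sinh (D - y) = K e\<^sup>-\<^sup>x\<close>; reflecting \<open>y\<close> when \<open>K < 0\<close> makes the constant positive\<close>
  define \<kappa> where "\<kappa> = sgn K"
  have \<kappa>: "\<kappa> = 1 \<or> \<kappa> = -1" and \<kappa>K: "\<kappa> * K = \<bar>K\<bar>"
    using \<open>K \<noteq> 0\<close> by (auto simp: \<kappa>_def sgn_if)
  show ?thesis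
  proof (rule similar_image_subsetI[OF similarity_reflection_translation[of 1 "- \<kappa>" "- ln \<bar>K\<bar>" "\<kappa> * D"]])
    fix u assume u: "u \<in> I"
    have "D - snd (Y u) = arsinh (snd (S u))" using D[OF u] by simp
    then have "sinh (D - snd (Y u)) = snd (S u)" by simp
    also have "\<dots> = K * exp (- fst (Y u))" using K[OF u] by (simp add: exp_minus field_simps)
    finally have "sinh (\<kappa> * (D - snd (Y u))) = \<kappa> * K * exp (- fst (Y u))"
      using \<kappa> by (auto simp del: minus_diff_eq)
    also have "\<dots> = \<bar>K\<bar> * exp (- fst (Y u))" by (simp add: \<kappa>K)
    also have "\<dots> = exp (- (fst (Y u) - ln \<bar>K\<bar>))"
      using \<open>K \<noteq> 0\<close> by (simp add: exp_diff exp_minus field_simps)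
    finally show "(1 * fst (Y u) + - ln \<bar>K\<bar>, - \<kappa> * snd (Y u) + \<kappa> * D) \<in> Gamma2"
      by (simp add: Gamma2_def algebra_simps)
  qed (use \<kappa> in auto)
qed

lemma translating_frenet_lightlike:
  assumes I: "is_interval I" and fr: "frenet I Y w S (\<lambda>u. - mink (1/2, 1/2) (hmul (S u)))"
    and pos: "\<And>u. u \<in> I \<Longrightarrow> fst (S u) > 0"
  shows "\<exists>F. similarity F \<and> F ` Y ` I \<subseteq> Gamma3"
proof -
  have k: "- mink (1/2, 1/2) (hmul p) = (fst p - snd p) / 2" for p by (simp add: mink_def hmul_def field_simps)
  note d = frenet_components[OF fr, unfolded k]
  define E where "E u = fst (S u) + snd (S u)" for u
  have unit: "(fst (S u) - snd (S u)) * E u = 1" if "u \<in> I" for u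
    using mink_unit_fst_square[OF frenetD(3)[OF fr that]] by (simp add: E_def algebra_simps power2_eq_square)
  have E_pos: "E u > 0" if u: "u \<in> I" for u
  proof (rule ccontr)
    assume "\<not> E u > 0"
    moreover from this have "fst (S u) - snd (S u) > 0" using pos[OF u] by (simp add: E_def)
    ultimately have "(fst (S u) - snd (S u)) * E u \<le> 0" by (simp add: mult_nonneg_nonpos)
    then show False using unit[OF u] by simp
  qed
  have dE: "(E has_real_derivative w u * (fst (S u) - snd (S u)) / 2 * E u) (at u)" if u: "u \<in> I" for u
    unfolding E_def[abs_def]
    by (rule DERIV_cong[OF DERIV_add[OF d(3)[OF u] d(4)[OF u]]]) (simp add: E_def field_simps)
  have "\<exists>Q. \<forall>u\<in>I. fst (Y u) + snd (Y u) - E u * E u = Q"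
  proof (rule constant_on_interval_if_derivative_zero[OF I])
    fix u assume u: "u \<in> I"
    note h = DERIV_diff[OF DERIV_add[OF d(1)[OF u] d(2)[OF u]] DERIV_mult[OF dE[OF u] dE[OF u]]]
    have "w u * fst (S u) + w u * snd (S u)
        - (w u * (fst (S u) - snd (S u)) / 2 * E u * E u + w u * (fst (S u) - snd (S u)) / 2 * E u * E u)
        = w u * E u * (1 - (fst (S u) - snd (S u)) * E u)"
      by (simp add: E_def field_simps)
    also have "\<dots> = 0" by (simp add: unit[OF u])
    finally show "((\<lambda>u. fst (Y u) + snd (Y u) - E u * E u) has_real_derivative 0) (at u)"
      by (rule DERIV_cong[OF h])
  qed
  then obtain Q\<^sub>1 where Q\<^sub>1: "\<And>u. u \<in> I \<Longrightarrow> fst (Y u) + snd (Y u) - E u * E u = Q\<^sub>1" by blast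
  have "\<exists>Q. \<forall>u\<in>I. ln (E u) - (fst (Y u) - snd (Y u)) / 2 = Q"
  proof (rule constant_on_interval_if_derivative_zero[OF I])
    fix u assume u: "u \<in> I"
    note h = DERIV_diff[OF DERIV_chain2[OF DERIV_ln[OF E_pos[OF u]] dE[OF u]]
        DERIV_cdivide[OF DERIV_diff[OF d(1)[OF u] d(2)[OF u]], of 2]]
    have "inverse (E u) * (w u * (fst (S u) - snd (S u)) / 2 * E u) - (w u * fst (S u) - w u * snd (S u)) / 2 = 0"
      using E_pos[OF u] by (simp add: field_simps)
    then show "((\<lambda>u. ln (E u) - (fst (Y u) - snd (Y u)) / 2) has_real_derivative 0) (at u)"
      by (rule DERIV_cong[OF h])
  qed
  then obtain Q\<^sub>2 where Q\<^sub>2: "\<And>u. u \<in> I \<Longrightarrow> ln (E u) - (fst (Y u) - snd (Y u)) / 2 = Q\<^sub>2" by blast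
  show ?thesis
  proof (rule similar_image_subsetI[OF similarity_reflection_translation[of 1 1
        "- ((Q\<^sub>1 - 2 * Q\<^sub>2) / 2)" "- ((Q\<^sub>1 + 2 * Q\<^sub>2) / 2)"]])
    fix u assume u: "u \<in> I"
    have "exp (fst (Y u) - snd (Y u) + 2 * Q\<^sub>2) = exp (2 * ln (E u))"
      using Q\<^sub>2[OF u] by (simp add: field_simps)
    also have "\<dots> = fst (Y u) + snd (Y u) - Q\<^sub>1"
      using E_pos[OF u] Q\<^sub>1[OF u] by (simp add: exp_double power2_eq_square)
    finally have curve: "fst (Y u) + snd (Y u) - Q\<^sub>1 = exp (fst (Y u) - snd (Y u) + 2 * Q\<^sub>2)" ..
    have "(1 * fst (Y u) + - ((Q\<^sub>1 - 2 * Q\<^sub>2) / 2)) + (1 * snd (Y u) + - ((Q\<^sub>1 + 2 * Q\<^sub>2) / 2))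
        = fst (Y u) + snd (Y u) - Q\<^sub>1"
     and "(1 * fst (Y u) + - ((Q\<^sub>1 - 2 * Q\<^sub>2) / 2)) - (1 * snd (Y u) + - ((Q\<^sub>1 + 2 * Q\<^sub>2) / 2))
        = fst (Y u) - snd (Y u) + 2 * Q\<^sub>2"
      by (simp_all add: field_simps)
    then show "(1 * fst (Y u) + - ((Q\<^sub>1 - 2 * Q\<^sub>2) / 2), 1 * snd (Y u) + - ((Q\<^sub>1 + 2 * Q\<^sub>2) / 2)) \<in> Gamma3"
      using curve by (simp only: mem_Gamma3_iff fst_conv snd_conv)
  qed simp_all
qed

lemma translating_frenet_lorentz_reduction:
  assumes I: "is_interval I" and fr: "frenet I X v T (\<lambda>u. - mink C (hmul (T u)))"
    and curved: "u\<^sub>0 \<in> I" "mink C (hmul (T u\<^sub>0)) \<noteq> 0"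
    and ab: "a * a - b * b = 1" and \<sigma>: "\<sigma> = 1 \<or> \<sigma> = -1" and c: "c > 0"
    and C\<^sub>0: "(1 / c) *\<^sub>R lorentz_map a b \<sigma> C = C\<^sub>0"
    and model: "\<And>Y w S. frenet I Y w S (\<lambda>u. - mink C\<^sub>0 (hmul (S u))) \<Longrightarrow> (\<And>u. u \<in> I \<Longrightarrow> fst (S u) > 0)
      \<Longrightarrow> mink C\<^sub>0 (hmul (S u\<^sub>0)) \<noteq> 0 \<Longrightarrow> \<exists>F. similarity F \<and> F ` Y ` I \<subseteq> G"
  shows "\<exists>F. similarity F \<and> F ` X ` I \<subseteq> G"
proof -
  note L = mink_isometry_lorentz_map[OF ab \<sigma>]
  obtain w S where "frenet I (\<lambda>u. c *\<^sub>R lorentz_map a b \<sigma> (X u)) w S (\<lambda>u. - mink C\<^sub>0 (hmul (S u)))"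
    and "\<And>u. u \<in> I \<Longrightarrow> fst (S u) > 0" and "mink C\<^sub>0 (hmul (S u\<^sub>0)) \<noteq> 0"
    using translating_frenet_normal_form[where L = "lorentz_map a b \<sigma>" and \<delta> = \<sigma>,
        OF I fr L hmul_lorentz_map[OF \<sigma>] \<sigma> c] curved
    unfolding C\<^sub>0 by metis
  then obtain F where "similarity F" "F ` (\<lambda>u. c *\<^sub>R lorentz_map a b \<sigma> (X u)) ` I \<subseteq> G"
    using model by blast
  then show ?thesis
    by (rule similar_image_subset_trans[OF _ _ similarity_scaled_isometry[OF c L]]) simp
qed

lemma translator_similar_to_model:
  assumes "translator I X" and "\<exists>u\<in>I. curv X u \<noteq> 0"
  shows "\<exists>F. similarity F \<and> (F ` X ` I \<subseteq> Gamma1 \<or> F ` X ` I \<subseteq> Gamma2 \<or> F ` X ` I \<subseteq> Gamma3)"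
proof -
  obtain C where sc: "spacelike_curve I X" and tw: "translates_with I X C"
    using assms(1) unfolding translator_def by blast
  have I: "is_interval I" using sc by (simp add: spacelike_curve_def)
  have fr: "frenet I X (speed X) (utan X) (\<lambda>u. - mink C (hmul (utan X u)))"
    by (rule frenet_curvature_cong[OF frenet_if_spacelike_curve[OF sc]])
       (use tw in \<open>simp add: translates_with_def unor_def\<close>)
  obtain u\<^sub>0 where u\<^sub>0: "u\<^sub>0 \<in> I" "mink C (hmul (utan X u\<^sub>0)) \<noteq> 0"
    using assms(2) tw by (auto simp: translates_with_def unor_def)
  note reduction = translating_frenet_lorentz_reduction[OF I fr u\<^sub>0]
  obtain p q where C: "C = (p, q)" by (cases C)
  consider (timelike) "q * q > p * p" | (spacelike) "p * p > q * q" | (lightlike) "p * p = q * q"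
    by linarith
  then show ?thesis
  proof cases
    case timelike
    define r where "r = sqrt (q * q - p * p)"
    have r: "r > 0" "r * r = q * q - p * p" using timelike by (simp_all add: r_def)
    have "\<exists>F. similarity F \<and> F ` X ` I \<subseteq> Gamma1"
      by (rule reduction[where a = "q / r" and b = "- p / r" and \<sigma> = 1 and c = r and C\<^sub>0 = "(0, 1)"])
         (use r I in \<open>auto simp: C lorentz_map_def field_simps intro: translating_frenet_timelike\<close>)
    then show ?thesis by blast
  next
    case spacelike
    define r where "r = sqrt (p * p - q * q)"
    have r: "r > 0" "r * r = p * p - q * q" using spacelike by (simp_all add: r_def)
    have "\<exists>F. similarity F \<and> F ` X ` I \<subseteq> Gamma2"
      by (rule reduction[where a = "p / r" and b = "- q / r" and \<sigma> = 1 and c = r and C\<^sub>0 = "(1, 0)"])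
         (use r I u\<^sub>0 in \<open>auto simp: C lorentz_map_def field_simps intro: translating_frenet_spacelike\<close>)
    then show ?thesis by blast
  next
    case lightlike
    have "p \<noteq> 0" using lightlike u\<^sub>0(2) by (auto simp: C mink_def)
    define \<sigma> where "\<sigma> = q / p"
    have \<sigma>: "\<sigma> = 1 \<or> \<sigma> = -1" and q: "q = \<sigma> * p"
      using lightlike \<open>p \<noteq> 0\<close> by (auto simp: \<sigma>_def square_eq_iff field_simps)
    have "\<exists>F. similarity F \<and> F ` X ` I \<subseteq> Gamma3"
      by (rule reduction[where a = "sgn p" and b = 0 and \<sigma> = \<sigma> and c = "2 * \<bar>p\<bar>" and C\<^sub>0 = "(1/2, 1/2)"])
         (use \<sigma> \<open>p \<noteq> 0\<close> I in \<open>auto simp: C q lorentz_map_def sgn_if intro: translating_frenet_lightlike\<close>)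
    then show ?thesis by blast
  qed
qed

section \<open>Inequivalence in null coordinates\<close>

definition xi :: "real \<times> real \<Rightarrow> real" where "xi p = fst p + snd p"
definition eta :: "real \<times> real \<Rightarrow> real" where "eta p = fst p - snd p"
definition of_null :: "real \<Rightarrow> real \<Rightarrow> real \<times> real" where "of_null u v = ((u + v) / 2, (u - v) / 2)"

lemma xi_of_null [simp]: "xi (of_null u v) = u" and eta_of_null [simp]: "eta (of_null u v) = v"
  by (simp_all add: xi_def eta_def of_null_def field_simps)

lemma mem_Gamma1_null: "p \<in> Gamma1 \<longleftrightarrow> exp (eta p) + exp (- xi p) = 2"
proof -
  obtain x y where p: "p = (x, y)" by (cases p)
  have "cosh x = exp y \<longleftrightarrow> exp x * exp (- y) + exp (- x) * exp (- y) = 2"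
    by (simp add: cosh_def exp_minus field_simps)
  also have "\<dots> \<longleftrightarrow> exp (x - y) + exp (- (x + y)) = 2"
    by (simp add: exp_add[symmetric] algebra_simps)
  finally show ?thesis by (simp add: p Gamma1_def xi_def eta_def)
qed

lemma mem_Gamma2_null: "p \<in> Gamma2 \<longleftrightarrow> exp (xi p) - exp (eta p) = 2"
proof -
  obtain x y where p: "p = (x, y)" by (cases p)
  have "sinh y = exp (- x) \<longleftrightarrow> exp x * exp y - exp x * exp (- y) = 2"
    by (simp add: sinh_def exp_minus field_simps) (rule eq_commute)
  also have "\<dots> \<longleftrightarrow> exp (x + y) - exp (x - y) = 2"
    by (simp add: exp_add[symmetric] algebra_simps)
  finally show ?thesis by (simp add: p Gamma2_def xi_def eta_def)
qed

lemma mem_Gamma3_null: "p \<in> Gamma3 \<longleftrightarrow> xi p = exp (eta p)"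
  by (simp add: mem_Gamma3_iff xi_def eta_def)

lemma mink_isometry_null_coords:
  assumes "mink_isometry L"
  shows "\<exists>l. l \<noteq> 0 \<and> ((\<forall>p. xi (L p) = l * xi p \<and> eta (L p) = eta p / l)
                    \<or> (\<forall>p. xi (L p) = l * eta p \<and> eta (L p) = xi p / l))"
proof -
  have lin: "linear L" and mL: "\<And>p q. mink (L p) (L q) = mink p q"
    using assms by (auto simp: mink_isometry_def)
  obtain a1 a2 where a: "L (1, 1) = (a1, a2)" by (cases "L (1, 1)")
  obtain b1 b2 where b: "L (1, -1) = (b1, b2)" by (cases "L (1, -1)")
  have aa: "a1 * a1 = a2 * a2" using mL[of "(1,1)" "(1,1)"] by (simp add: a mink_def)
  have bb: "b1 * b1 = b2 * b2" using mL[of "(1,-1)" "(1,-1)"] by (simp add: b mink_def)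
  have ab: "a1 * b1 - a2 * b2 = 2" using mL[of "(1,1)" "(1,-1)"] by (simp add: a b mink_def)
  have "L p = L ((xi p / 2) *\<^sub>R (1, 1) + (eta p / 2) *\<^sub>R (1, -1))" for p
    by (cases p) (simp add: xi_def eta_def field_simps)
  then have Lp: "L p = (xi p / 2) *\<^sub>R (a1, a2) + (eta p / 2) *\<^sub>R (b1, b2)" for p
    by (simp only: linear_add[OF lin] linear_scale[OF lin] a b)
  have xiL: "xi (L p) = xi p / 2 * (a1 + a2) + eta p / 2 * (b1 + b2)" for p
    by (simp add: Lp xi_def field_simps)
  have etaL: "eta (L p) = xi p / 2 * (a1 - a2) + eta p / 2 * (b1 - b2)" for p
    by (simp add: Lp eta_def field_simps)
  from aa have "a2 = a1 \<or> a2 = - a1" by (simp add: square_eq_iff) linarith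
  moreover from bb have "b2 = b1 \<or> b2 = - b1" by (simp add: square_eq_iff) linarith
  ultimately consider "a2 = a1" "b2 = - b1" | "a2 = - a1" "b2 = b1"
    using ab by force
  then show ?thesis
  proof cases
    case 1
    then have "a1 * b1 = 1" using ab by simp
    moreover from this have "a1 \<noteq> 0" by auto
    ultimately have "b1 = 1 / a1" by (simp add: field_simps)
    then have "\<forall>p. xi (L p) = a1 * xi p \<and> eta (L p) = eta p / a1"
      using 1 by (simp add: xiL etaL field_simps)
    then show ?thesis using \<open>a1 \<noteq> 0\<close> by blast
  next
    case 2
    then have "a1 * b1 = 1" using ab by simp
    moreover from this have "b1 \<noteq> 0" by auto
    ultimately have "a1 = 1 / b1" by (simp add: field_simps)
    then have "\<forall>p. xi (L p) = b1 * eta p \<and> eta (L p) = xi p / b1"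
      using 2 by (simp add: xiL etaL field_simps)
    then show ?thesis using \<open>b1 \<noteq> 0\<close> by blast
  qed
qed

lemma similarity_null_coords:
  assumes "similarity F"
  shows "\<exists>A A' B B'. A \<noteq> 0 \<and> A' \<noteq> 0 \<and>
     ((\<forall>p. xi (F p) = A * xi p + B \<and> eta (F p) = A' * eta p + B')
    \<or> (\<forall>p. xi (F p) = A * eta p + B \<and> eta (F p) = A' * xi p + B'))"
proof -
  obtain c L b where c: "c > 0" and L: "mink_isometry L" and F: "F = (\<lambda>p. c *\<^sub>R L p + b)"
    using assms unfolding similarity_def by blast
  obtain l where l: "l \<noteq> 0" and h: "(\<forall>p. xi (L p) = l * xi p \<and> eta (L p) = eta p / l)
      \<or> (\<forall>p. xi (L p) = l * eta p \<and> eta (L p) = xi p / l)"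
    using mink_isometry_null_coords[OF L] by blast
  have "xi (F p) = c * xi (L p) + xi b" and "eta (F p) = c * eta (L p) + eta b" for p
    by (simp_all add: F xi_def eta_def algebra_simps)
  with h have "(\<forall>p. xi (F p) = (c * l) * xi p + xi b \<and> eta (F p) = (c / l) * eta p + eta b)
    \<or> (\<forall>p. xi (F p) = (c * l) * eta p + xi b \<and> eta (F p) = (c / l) * xi p + eta b)"
    by auto
  moreover have "c * l \<noteq> 0" "c / l \<noteq> 0" using c l by auto
  ultimately show ?thesis by blast
qed

lemma not_similar_subset_if_no_null_affine_map:
  assumes sim: "similarity F"
    and S: "\<And>p. p \<in> S \<longleftrightarrow> P (xi p) (eta p)" and T: "\<And>p. p \<in> T \<longleftrightarrow> Q (xi p) (eta p)"
    and straight: "\<And>A A' B B'. (\<And>u v. P u v \<Longrightarrow> Q (A * u + B) (A' * v + B')) \<Longrightarrow> A \<noteq> 0 \<Longrightarrow> A' \<noteq> 0 \<Longrightarrow> False"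
    and swapped: "\<And>A A' B B'. (\<And>u v. P u v \<Longrightarrow> Q (A * v + B) (A' * u + B')) \<Longrightarrow> A \<noteq> 0 \<Longrightarrow> A' \<noteq> 0 \<Longrightarrow> False"
  shows "\<not> F ` S \<subseteq> T"
proof
  assume inc: "F ` S \<subseteq> T"
  have H: "Q (xi (F (of_null u v))) (eta (F (of_null u v)))" if "P u v" for u v
  proof -
    have "of_null u v \<in> S" using that S by simp
    then have "F (of_null u v) \<in> T" using inc by blast
    then show ?thesis using T by simp
  qed
  obtain A A' B B' where A: "A \<noteq> 0" "A' \<noteq> 0" and cases:
     "(\<forall>p. xi (F p) = A * xi p + B \<and> eta (F p) = A' * eta p + B')
    \<or> (\<forall>p. xi (F p) = A * eta p + B \<and> eta (F p) = A' * xi p + B')"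
    using similarity_null_coords[OF sim] by blast
  from cases show False
  proof
    assume m: "\<forall>p. xi (F p) = A * xi p + B \<and> eta (F p) = A' * eta p + B'"
    show False by (rule straight[OF _ A]) (use H m in simp)
  next
    assume m: "\<forall>p. xi (F p) = A * eta p + B \<and> eta (F p) = A' * xi p + B'"
    show False by (rule swapped[OF _ A]) (use H m in simp)
  qed
qed

lemma exists_nonneg_affine_ge: "(A::real) > 0 \<Longrightarrow> \<exists>s\<ge>0. M \<le> A * s + B"
  by (rule exI[of _ "max 0 ((M - B) / A)"]) (auto simp: field_simps max_def)

lemma exists_nonneg_affine_le: "(A::real) < 0 \<Longrightarrow> \<exists>s\<ge>0. A * s + B \<le> M"
  using exists_nonneg_affine_ge[of "- A" "- M" "- B"] by auto

lemma affine_le_abs_bound: "\<bar>v\<bar> \<le> 1 \<Longrightarrow> A * v + B \<le> \<bar>A\<bar> + \<bar>B::real\<bar>"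
proof -
  assume v: "\<bar>v\<bar> \<le> 1"
  have "\<bar>A * v\<bar> \<le> \<bar>A\<bar>" using mult_left_le[OF v, of "\<bar>A\<bar>"] by (simp add: abs_mult)
  then show ?thesis by linarith
qed

lemma exp_dominates_affine:
  assumes a: "(a::real) > 0"
  shows "\<exists>s\<ge>0. a * exp s > M + N * s"
proof -
  define K where "K = \<bar>M\<bar> + \<bar>N\<bar> + 1"
  define s where "s = 2 * K / a + 2"
  have K0: "K > 0" by (simp add: K_def)
  have s1: "s \<ge> 1" using K0 a by (simp add: s_def)
  have "a * exp s \<ge> a * (s * s / 2)"
    using exp_lower_Taylor_quadratic[of s] s1 a by (simp add: power2_eq_square)
  moreover have "a * (s * s / 2) = \<bar>M\<bar> * s + \<bar>N\<bar> * s + s + a * s"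
    using a by (simp add: s_def K_def field_simps)
  moreover have "\<bar>M\<bar> * s \<ge> \<bar>M\<bar>" using s1 by (simp add: mult_le_cancel_left1)
  moreover have "\<bar>N\<bar> * s \<ge> N * s" using s1 by (simp add: mult_right_mono)
  moreover have "a * s > 0" using a s1 by simp
  moreover have "\<bar>M\<bar> \<ge> M" by simp
  ultimately have "a * exp s > M + N * s" using s1 by linarith
  then show ?thesis using s1 by (intro exI[of _ s]) auto
qed

lemma ln_two_plus_exp_less: "ln (2 + exp z) < 2 + \<bar>z::real\<bar>"
proof -
  have "exp z \<le> exp \<bar>z\<bar>" "1 \<le> exp \<bar>z\<bar>" by simp_all
  then have "2 + exp z \<le> 3 * exp \<bar>z\<bar>" by linarith
  moreover have "3 < exp (2::real)"
    using exp_lower_Taylor_quadratic[of 2] by (simp add: power2_eq_square)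
  then have "3 * exp \<bar>z\<bar> < exp 2 * exp \<bar>z\<bar>" by (intro mult_strict_right_mono) auto
  ultimately have "2 + exp z < exp (2 + \<bar>z\<bar>)" unfolding exp_add by linarith
  moreover have "0 < 2 + exp z" using exp_gt_zero[of z] by linarith
  ultimately have "ln (2 + exp z) < ln (exp (2 + \<bar>z\<bar>))" by (subst ln_less_cancel_iff) auto
  then show ?thesis by simp
qed

lemma Gamma1_null_bounds:
  fixes u v :: real
  assumes "exp v + exp (- u) = 2"
  shows "v < ln 2" and "- ln 2 < u"
proof -
  have "exp v < 2" "exp (- u) < 2" using assms exp_gt_zero[of v] exp_gt_zero[of "- u"] by linarith+
  then have "exp v < exp (ln 2)" "exp (- u) < exp (ln 2)" by simp_all
  then have "v < ln 2" "- u < ln 2" by (simp_all only: exp_less_cancel_iff)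
  then show "v < ln 2" "- ln 2 < u" by linarith+
qed

lemma Gamma1_null_branch:
  fixes s :: real
  assumes "s \<ge> 0"
  shows "exp (ln (2 - exp (- s))) = 2 - exp (- s)" and "\<bar>ln (2 - exp (- s))\<bar> \<le> 1"
proof -
  have e: "exp (- s) \<le> 1" "exp (- s) > 0" using assms by auto
  then have pos: "2 - exp (- s) > 0" by linarith
  then show "exp (ln (2 - exp (- s))) = 2 - exp (- s)" by simp
  have "0 \<le> ln (2 - exp (- s))" using e(1) by (intro ln_ge_zero) linarith
  moreover have "ln (2 - exp (- s)) \<le> ln 2" using e(2) pos by (intro ln_mono) linarith+
  ultimately show "\<bar>ln (2 - exp (- s))\<bar> \<le> 1" using ln_2_less_1 by simp
qed

lemma no_affine_exp_eq_two_plus_bounded: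
  fixes A B K :: real
  assumes A: "A \<noteq> 0" and eq: "\<And>s. s \<ge> 0 \<Longrightarrow> exp (A * s + B) = 2 + exp (b s)"
    and bound: "\<And>s. s \<ge> 0 \<Longrightarrow> b s \<le> K"
  shows False
proof (cases "A > 0")
  case True
  then obtain s where s: "s \<ge> 0" "ln (3 + exp K) \<le> A * s + B"
    using exists_nonneg_affine_ge[OF True] by blast
  then have "3 + exp K \<le> exp (A * s + B)"
    by (metis exp_le_cancel_iff exp_ln add_pos_pos exp_gt_zero zero_less_numeral)
  moreover have "exp (b s) \<le> exp K" using bound[OF s(1)] by simp
  ultimately show False using eq[OF s(1)] by linarith
next
  case False
  then obtain s where s: "s \<ge> 0" "A * s + B \<le> ln 2"
    using A exists_nonneg_affine_le[of A] by (metis linorder_neqE_linordered_idom)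
  then have "exp (A * s + B) \<le> 2" by (metis exp_le_cancel_iff exp_ln zero_less_numeral)
  then show False using eq[OF s(1)] exp_gt_zero[of "b s"] by linarith
qed

lemma no_affine_eq_exp_bounded:
  fixes A B K :: real
  assumes A: "A \<noteq> 0" and eq: "\<And>s. s \<ge> 0 \<Longrightarrow> A * s + B = exp (b s)"
    and bound: "\<And>s. s \<ge> 0 \<Longrightarrow> b s \<le> K"
  shows False
proof (cases "A > 0")
  case True
  then obtain s where s: "s \<ge> 0" "exp K + 1 \<le> A * s + B"
    using exists_nonneg_affine_ge[OF True] by blast
  moreover have "exp (b s) \<le> exp K" using bound[OF s(1)] by simp
  ultimately show False using eq[OF s(1)] by linarith
next
  case False
  then obtain s where s: "s \<ge> 0" "A * s + B \<le> 0"
    using A exists_nonneg_affine_le[of A] by (metis linorder_neqE_linordered_idom)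
  then show False using eq[OF s(1)] exp_gt_zero[of "b s"] by linarith
qed

text \<open>In the names below, \<open>map\<close> refers to a similarity acting on each null coordinate by an affine
  map and \<open>swap\<close> to one exchanging them (\<open>similarity_null_coords\<close>); the hypothesis \<open>H\<close> says that it
  sends the first curve into the second.\<close>

lemma no_null_map_Gamma1_Gamma2:
  fixes A A' B B' :: real
  assumes H: "\<And>u v. exp v + exp (- u) = 2 \<Longrightarrow> exp (A * u + B) - exp (A' * v + B') = 2" and A: "A \<noteq> 0"
  shows False
proof (rule no_affine_exp_eq_two_plus_bounded[OF A])
  fix s :: real assume s: "s \<ge> 0"
  have "exp (A * s + B) - exp (A' * ln (2 - exp (- s)) + B') = 2"
    by (rule H) (simp add: Gamma1_null_branch(1)[OF s])
  then show "exp (A * s + B) = 2 + exp (A' * ln (2 - exp (- s)) + B')" by simp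
  show "A' * ln (2 - exp (- s)) + B' \<le> \<bar>A'\<bar> + \<bar>B'\<bar>"
    by (rule affine_le_abs_bound[OF Gamma1_null_branch(2)[OF s]])
qed

lemma no_null_swap_Gamma1_Gamma2:
  fixes A A' B B' :: real
  assumes H: "\<And>u v. exp v + exp (- u) = 2 \<Longrightarrow> exp (A * v + B) - exp (A' * u + B') = 2" and A: "A \<noteq> 0"
  shows False
proof (rule no_affine_exp_eq_two_plus_bounded[of "- A"])
  fix s :: real assume s: "s \<ge> 0"
  have "exp (A * - s + B) - exp (A' * - ln (2 - exp (- s)) + B') = 2"
    by (rule H) (simp add: Gamma1_null_branch(1)[OF s])
  then show "exp (- A * s + B) = 2 + exp (A' * - ln (2 - exp (- s)) + B')" by simp
  show "A' * - ln (2 - exp (- s)) + B' \<le> \<bar>A'\<bar> + \<bar>B'\<bar>"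
    by (rule affine_le_abs_bound) (use Gamma1_null_branch(2)[OF s] in simp)
qed (use A in simp)

lemma no_null_map_Gamma1_Gamma3:
  fixes A A' B B' :: real
  assumes H: "\<And>u v. exp v + exp (- u) = 2 \<Longrightarrow> A * u + B = exp (A' * v + B')" and A: "A \<noteq> 0"
  shows False
proof (rule no_affine_eq_exp_bounded[OF A])
  fix s :: real assume s: "s \<ge> 0"
  show "A * s + B = exp (A' * ln (2 - exp (- s)) + B')"
    by (rule H) (simp add: Gamma1_null_branch(1)[OF s])
  show "A' * ln (2 - exp (- s)) + B' \<le> \<bar>A'\<bar> + \<bar>B'\<bar>"
    by (rule affine_le_abs_bound[OF Gamma1_null_branch(2)[OF s]])
qed

lemma no_null_swap_Gamma1_Gamma3:
  fixes A A' B B' :: real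
  assumes H: "\<And>u v. exp v + exp (- u) = 2 \<Longrightarrow> A * v + B = exp (A' * u + B')" and A: "A \<noteq> 0"
  shows False
proof (rule no_affine_eq_exp_bounded[of "- A"])
  fix s :: real assume s: "s \<ge> 0"
  have "A * - s + B = exp (A' * - ln (2 - exp (- s)) + B')"
    by (rule H) (simp add: Gamma1_null_branch(1)[OF s])
  then show "- A * s + B = exp (A' * - ln (2 - exp (- s)) + B')" by simp
  show "A' * - ln (2 - exp (- s)) + B' \<le> \<bar>A'\<bar> + \<bar>B'\<bar>"
    by (rule affine_le_abs_bound) (use Gamma1_null_branch(2)[OF s] in simp)
qed (use A in simp)

text \<open>Every value of \<open>\<eta>\<close> occurs on \<open>\<Gamma>\<^sub>2\<close> and on \<open>\<Gamma>\<^sub>3\<close>, whereas \<open>\<eta> < ln 2\<close> and \<open>\<xi> > - ln 2\<close> on \<open>\<Gamma>\<^sub>1\<close>.\<close>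

lemma no_null_map_into_Gamma1:
  fixes A A' B B' :: real
  assumes P: "\<And>v. \<exists>u. P u v" and H: "\<And>u v. P u v \<Longrightarrow> exp (A' * v + B') + exp (- (A * u + B)) = 2"
    and A': "A' \<noteq> 0"
  shows False
proof -
  obtain u where "P u ((ln 2 - B') / A')" using P by blast
  from Gamma1_null_bounds[OF H[OF this]] show False using A' by simp
qed

lemma no_null_swap_into_Gamma1:
  fixes A A' B B' :: real
  assumes P: "\<And>v. \<exists>u. P u v" and H: "\<And>u v. P u v \<Longrightarrow> exp (A' * u + B') + exp (- (A * v + B)) = 2"
    and A: "A \<noteq> 0"
  shows False
proof -
  obtain u where "P u ((- ln 2 - B) / A)" using P by blast
  from Gamma1_null_bounds[OF H[OF this]] show False using A by simp
qed

lemma Gamma2_null_every_eta: "\<exists>u. exp u - exp v = (2::real)"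
  by (rule exI[of _ "ln (2 + exp v)"]) (simp add: add_pos_pos)

lemma Gamma3_null_every_eta: "\<exists>u. u = exp (v::real)"
  by simp

lemma no_null_map_Gamma2_Gamma3:
  fixes A A' B B' :: real
  assumes H: "\<And>u v. exp u - exp v = 2 \<Longrightarrow> A * u + B = exp (A' * v + B')" and A': "A' \<noteq> 0"
  shows False
proof -
  have eq: "A * ln (2 + exp v) + B = exp (A' * v + B')" for v
    by (rule H) (simp add: add_pos_pos)
  obtain s where s: "s \<ge> 0" "exp B' * exp s > (2 * \<bar>A\<bar> + \<bar>B\<bar>) + (\<bar>A\<bar> / \<bar>A'\<bar>) * s"
    using exp_dominates_affine[OF exp_gt_zero] by blast
  define v where "v = s / A'"
  have "\<bar>A * ln (2 + exp v) + B\<bar> \<le> \<bar>A\<bar> * (2 + \<bar>v\<bar>) + \<bar>B\<bar>"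
  proof -
    have "0 \<le> ln (2 + exp v)" by (simp add: add_pos_pos)
    moreover have "ln (2 + exp v) \<le> 2 + \<bar>v\<bar>" using ln_two_plus_exp_less[of v] by simp
    ultimately have "\<bar>A * ln (2 + exp v)\<bar> \<le> \<bar>A\<bar> * (2 + \<bar>v\<bar>)"
      by (simp add: abs_mult mult_left_mono)
    then show ?thesis by (smt (verit) abs_triangle_ineq)
  qed
  moreover have "\<bar>v\<bar> = s / \<bar>A'\<bar>" "exp (A' * v + B') = exp B' * exp s"
    using s(1) A' by (simp_all add: v_def exp_add)
  ultimately show False using eq[of v] s(2) by (simp add: algebra_simps)
qed

lemma no_null_swap_Gamma2_Gamma3:
  fixes A A' B B' :: real
  assumes H: "\<And>u v. exp u - exp v = 2 \<Longrightarrow> A * v + B = exp (A' * u + B')" and A: "A \<noteq> 0"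
  shows False
proof -
  obtain u where "exp u - exp (- B / A) = 2" using Gamma2_null_every_eta by blast
  from H[OF this] show False using A by simp
qed

lemma no_null_map_Gamma3_Gamma2:
  fixes A A' B B' :: real
  assumes H: "\<And>u v. u = exp v \<Longrightarrow> exp (A * u + B) - exp (A' * v + B') = 2" and A: "A \<noteq> 0"
  shows False
proof -
  have eq: "exp (A * exp v + B) = 2 + exp (A' * v + B')" for v
    using H[OF refl, of v] by simp
  show False
  proof (cases "A > 0")
    case True
    obtain v where v: "v \<ge> 0" "A * exp v > (2 + \<bar>B'\<bar> - B) + \<bar>A'\<bar> * v"
      using exp_dominates_affine[OF True] by blast
    have "A * exp v + B = ln (2 + exp (A' * v + B'))" using eq[of v] by (metis ln_exp)
    also have "\<dots> < 2 + \<bar>A' * v + B'\<bar>" by (rule ln_two_plus_exp_less)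
    also have "\<dots> \<le> 2 + \<bar>A'\<bar> * v + \<bar>B'\<bar>"
      using v(1) abs_triangle_ineq[of "A' * v" B'] by (simp add: abs_mult)
    finally show False using v(2) by linarith
  next
    case False
    then have "A < 0" using A by simp
    then obtain s where "s \<ge> 0" "A * s + B \<le> 0" using exists_nonneg_affine_le by blast
    moreover have "A * exp (ln (s + 1)) + B = A * s + B + A" using \<open>s \<ge> 0\<close> by (simp add: algebra_simps)
    ultimately have "A * exp (ln (s + 1)) + B < 0" using \<open>A < 0\<close> by linarith
    then have "exp (A * exp (ln (s + 1)) + B) < 1" by simp
    then show False using eq[of "ln (s + 1)"] exp_gt_zero[of "A' * ln (s + 1) + B'"] by linarith
  qed
qed

lemma no_null_swap_Gamma3_Gamma2:
  fixes A A' B B' :: real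
  assumes H: "\<And>u v. u = exp v \<Longrightarrow> exp (A * v + B) - exp (A' * u + B') = 2" and A: "A \<noteq> 0"
  shows False
  using H[OF refl, of "- B / A"] A exp_gt_zero[of "A' * exp (- B / A) + B'"] by simp

lemma models_pairwise_not_similar:
  assumes "similarity F"
  shows "\<not> F ` Gamma1 \<subseteq> Gamma2 \<and> \<not> F ` Gamma1 \<subseteq> Gamma3 \<and>
         \<not> F ` Gamma2 \<subseteq> Gamma1 \<and> \<not> F ` Gamma2 \<subseteq> Gamma3 \<and>
         \<not> F ` Gamma3 \<subseteq> Gamma1 \<and> \<not> F ` Gamma3 \<subseteq> Gamma2"
proof (intro conjI)
  show "\<not> F ` Gamma1 \<subseteq> Gamma2"
    by (rule not_similar_subset_if_no_null_affine_map
          [where P = "\<lambda>u v. exp v + exp (- u) = 2"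
             and Q = "\<lambda>u v. exp u - exp v = 2",
          OF assms mem_Gamma1_null mem_Gamma2_null])
       (erule (1) no_null_map_Gamma1_Gamma2, erule (1) no_null_swap_Gamma1_Gamma2)
  show "\<not> F ` Gamma1 \<subseteq> Gamma3"
    by (rule not_similar_subset_if_no_null_affine_map
          [where P = "\<lambda>u v. exp v + exp (- u) = 2"
             and Q = "\<lambda>u v. u = exp v",
          OF assms mem_Gamma1_null mem_Gamma3_null])
       (erule (1) no_null_map_Gamma1_Gamma3, erule (1) no_null_swap_Gamma1_Gamma3)
  show "\<not> F ` Gamma2 \<subseteq> Gamma1"
    by (rule not_similar_subset_if_no_null_affine_map
          [where P = "\<lambda>u v. exp u - exp v = 2"
             and Q = "\<lambda>u v. exp v + exp (- u) = 2",
          OF assms mem_Gamma2_null mem_Gamma1_null])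
       (erule (1) no_null_map_into_Gamma1[OF Gamma2_null_every_eta],
        erule (1) no_null_swap_into_Gamma1[OF Gamma2_null_every_eta])
  show "\<not> F ` Gamma2 \<subseteq> Gamma3"
    by (rule not_similar_subset_if_no_null_affine_map
          [where P = "\<lambda>u v. exp u - exp v = 2"
             and Q = "\<lambda>u v. u = exp v",
          OF assms mem_Gamma2_null mem_Gamma3_null])
       (erule (1) no_null_map_Gamma2_Gamma3, erule (1) no_null_swap_Gamma2_Gamma3)
  show "\<not> F ` Gamma3 \<subseteq> Gamma1"
    by (rule not_similar_subset_if_no_null_affine_map
          [where P = "\<lambda>u v. u = exp v"
             and Q = "\<lambda>u v. exp v + exp (- u) = 2",
          OF assms mem_Gamma3_null mem_Gamma1_null])
       (erule (1) no_null_map_into_Gamma1[OF Gamma3_null_every_eta],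
        erule (1) no_null_swap_into_Gamma1[OF Gamma3_null_every_eta])
  show "\<not> F ` Gamma3 \<subseteq> Gamma2"
    by (rule not_similar_subset_if_no_null_affine_map
          [where P = "\<lambda>u v. u = exp v"
             and Q = "\<lambda>u v. exp u - exp v = 2",
          OF assms mem_Gamma3_null mem_Gamma2_null])
       (erule (1) no_null_map_Gamma3_Gamma2, erule (1) no_null_swap_Gamma3_Gamma2)
qed

theorem theorem5p1:
  shows
  "(spacelike_curve {-pi/2<..<pi/2} gamma1 \<and> gamma1 ` {-pi/2<..<pi/2} = Gamma1
      \<and> (\<forall>s\<in>{-pi/2<..<pi/2}. speed gamma1 s = 1 \<and> curv gamma1 s = 1 / cos s)
      \<and> translates_with {-pi/2<..<pi/2} gamma1 (0, 1))
   \<and> (spacelike_curve {0<..} gamma2 \<and> gamma2 ` {0<..} = Gamma2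
      \<and> (\<forall>s\<in>{0<..}. speed gamma2 s = 1 \<and> curv gamma2 s = 1 / sinh s)
      \<and> translates_with {0<..} gamma2 (1, 0))
   \<and> (spacelike_curve {0<..} gamma3 \<and> gamma3 ` {0<..} = Gamma3
      \<and> (\<forall>s\<in>{0<..}. speed gamma3 s = 1 \<and> curv gamma3 s = 1 / s)
      \<and> translates_with {0<..} gamma3 (1/2, 1/2))
   \<and> (\<forall>I X. translator I X \<and> (\<exists>u\<in>I. curv X u \<noteq> 0) \<longrightarrow>
        (\<exists>F. similarity F \<and>
           (F ` X ` I \<subseteq> Gamma1 \<or> F ` X ` I \<subseteq> Gamma2 \<or> F ` X ` I \<subseteq> Gamma3)))
   \<and> (\<forall>F. similarity F \<longrightarrow>
        \<not> F ` Gamma1 \<subseteq> Gamma2 \<and> \<not> F ` Gamma1 \<subseteq> Gamma3 \<and>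
        \<not> F ` Gamma2 \<subseteq> Gamma1 \<and> \<not> F ` Gamma2 \<subseteq> Gamma3 \<and>
        \<not> F ` Gamma3 \<subseteq> Gamma1 \<and> \<not> F ` Gamma3 \<subseteq> Gamma2)"
proof -
  have "\<forall>I X. translator I X \<and> (\<exists>u\<in>I. curv X u \<noteq> 0) \<longrightarrow>
      (\<exists>F. similarity F \<and> (F ` X ` I \<subseteq> Gamma1 \<or> F ` X ` I \<subseteq> Gamma2 \<or> F ` X ` I \<subseteq> Gamma3))"
    using translator_similar_to_model by blast
  moreover have "\<forall>F. similarity F \<longrightarrow>
      \<not> F ` Gamma1 \<subseteq> Gamma2 \<and> \<not> F ` Gamma1 \<subseteq> Gamma3 \<and>
      \<not> F ` Gamma2 \<subseteq> Gamma1 \<and> \<not> F ` Gamma2 \<subseteq> Gamma3 \<and>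
      \<not> F ` Gamma3 \<subseteq> Gamma1 \<and> \<not> F ` Gamma3 \<subseteq> Gamma2"
    using models_pairwise_not_similar by blast
  ultimately show ?thesis
    using gamma1_translator gamma2_translator gamma3_translator by simp
qed

end
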